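(* Let $A$ be a reproducible multiset, and let $B$ be a reproducible multiset such that $A\subseteq B\subseteq Z(\mathcal S_A)$ (inclusions of multisets, counting multiplicity), where $Z(\mathcal S_A)$ is the multiset of zeros of $\mathcal S_A$ in $\Omega$ together with its zeros at reproducible points, each listed with multiplicity (a reproducible point $\beta$ being counted $m$ times if $\mathcal S_A^{(\ell)}(\beta)=0$ for all $0\le\ell<m$ and $\beta$ is reproducible of order $m-1$). Then $\mathcal S_B$ is a constant multiple of $\mathcal S_A$.
   Context: Standing assumptions: $\Omega\subset\mathbb C$ is a domain with $0\in\Omega$, $\mathcal H$ is a Hilbert space of analytic functions on $\Omega$ with bounded point evaluations at points of $\Omega$, the shift $(Sf)(z)=zf(z)$ is bounded on $\mathcal H$, and the polynomials $\mathcal P$ are dense in $\mathcal H$. A point $\beta\in\mathbb C$ is reproducible of order $m\ge0$ if $p\mapsto p^{(m)}(\beta)$ on $\mathcal P$ extends to a bounded linear functional on $\mathcal H$; the value of the extension at $g\in\mathcal H$ is written $g^{(m)}(\beta)$ and it is represented by $k_\beta^{(m)}\in\mathcal H$. $\beta$ is a reproducible point if reproducible of order $0$; reproducibility of order $m$ implies that of all orders $j\le m$; $\operatorname{ro}(\beta)$ is the supremum of orders of reproducibility. A reproducible multiset is a finite multiset consisting of $0$ with multiplicity $m_0\ge0$ and distinct nonzero reproducible points $\beta_1,\dots,\beta_s$ with multiplicities $1\le m_j\le\operatorname{ro}(\beta_j)+1$. For vectors $u,v_1,\dots,v_N$, $D(u;v_1,\dots,v_N)$ is the formal determinant of the matrix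 with first row $(u,\langle u,v_1\rangle,\dots,\langle u,v_N\rangle)$ and $(i+1)$-st row $(v_i,\langle v_i,v_1\rangle,\dots,\langle v_i,v_N\rangle)$, expanded along the first column. The Shapiro–Shields function of a reproducible multiset $Z$ is $\mathcal S_Z=D(k_0^{(m_0)};k_0^{(m_0-1)},\dots,k_0,k_{\beta_1}^{(m_1-1)},\dots,k_{\beta_1},\dots,k_{\beta_s}^{(m_s-1)},\dots,k_{\beta_s})$. *)

theory Defs
  imports "HOL-Complex_Analysis.Complex_Analysis"
    "HOL-Computational_Algebra.Polynomial"
    "HOL-Library.Multiset"
    "HOL-Library.Extended_Nat"
begin

text \<open>A Hilbert space of analytic functions on \<Omega> is modelled by a carrier set
  H of functions complex \<Rightarrow> complex (each vanishing outside \<Omega>, so that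
  elements are identified with their restriction to \<Omega>) together with a
  complex inner product ip, linear in the first and conjugate-linear in the
  second argument.\<close>

definition hnorm :: "((complex \<Rightarrow> complex) \<Rightarrow> (complex \<Rightarrow> complex) \<Rightarrow> complex)
    \<Rightarrow> (complex \<Rightarrow> complex) \<Rightarrow> real" where
  "hnorm ip f = sqrt (Re (ip f f))"

definition polyH :: "complex set \<Rightarrow> complex poly \<Rightarrow> (complex \<Rightarrow> complex)" where
  "polyH \<Omega> p = (\<lambda>z. if z \<in> \<Omega> then poly p z else 0)"

definition analytic_hilbert_space ::
  "complex set \<Rightarrow> (complex \<Rightarrow> complex) set
     \<Rightarrow> ((complex \<Rightarrow> complex) \<Rightarrow> (complex \<Rightarrow> complex) \<Rightarrow> complex) \<Rightarrow> bool" where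
  "analytic_hilbert_space \<Omega> H ip \<longleftrightarrow>
     \<comment> \<open>\<Omega> is a domain containing 0\<close>
     open \<Omega> \<and> connected \<Omega> \<and> 0 \<in> \<Omega> \<and>
     \<comment> \<open>H is a complex vector space of analytic functions on \<Omega>\<close>
     (\<lambda>_. 0) \<in> H \<and>
     (\<forall>f\<in>H. \<forall>g\<in>H. (\<lambda>z. f z + g z) \<in> H) \<and>
     (\<forall>c. \<forall>f\<in>H. (\<lambda>z. c * f z) \<in> H) \<and>
     (\<forall>f\<in>H. f holomorphic_on \<Omega> \<and> (\<forall>z. z \<notin> \<Omega> \<longrightarrow> f z = 0)) \<and>
     \<comment> \<open>ip is an inner product on H\<close>
     (\<forall>f\<in>H. \<forall>g\<in>H. \<forall>h\<in>H. ip (\<lambda>z. f z + g z) h = ip f h + ip g h) \<and>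
     (\<forall>c. \<forall>f\<in>H. \<forall>h\<in>H. ip (\<lambda>z. c * f z) h = c * ip f h) \<and>
     (\<forall>f\<in>H. \<forall>g\<in>H. ip g f = cnj (ip f g)) \<and>
     (\<forall>f\<in>H. 0 \<le> Re (ip f f) \<and> (ip f f = 0 \<longrightarrow> f = (\<lambda>_. 0))) \<and>
     \<comment> \<open>completeness\<close>
     (\<forall>F::nat \<Rightarrow> complex \<Rightarrow> complex. (\<forall>n. F n \<in> H) \<longrightarrow>
        (\<forall>e>0. \<exists>N. \<forall>m\<ge>N. \<forall>n\<ge>N. hnorm ip (\<lambda>z. F m z - F n z) < e) \<longrightarrow>
        (\<exists>f\<in>H. (\<lambda>n. hnorm ip (\<lambda>z. F n z - f z)) \<longlonglongrightarrow> 0)) \<and>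
     \<comment> \<open>bounded point evaluations at points of \<Omega>\<close>
     (\<forall>w\<in>\<Omega>. \<exists>C. \<forall>f\<in>H. norm (f w) \<le> C * hnorm ip f) \<and>
     \<comment> \<open>bounded shift\<close>
     (\<forall>f\<in>H. (\<lambda>z. z * f z) \<in> H) \<and>
     (\<exists>C. \<forall>f\<in>H. hnorm ip (\<lambda>z. z * f z) \<le> C * hnorm ip f) \<and>
     \<comment> \<open>polynomials are in H and dense\<close>
     (\<forall>p. polyH \<Omega> p \<in> H) \<and>
     (\<forall>f\<in>H. \<forall>e>0. \<exists>p. hnorm ip (\<lambda>z. f z - polyH \<Omega> p z) < e)"

definition reproducible_order ::
  "complex set \<Rightarrow> (complex \<Rightarrow> complex) set
     \<Rightarrow> ((complex \<Rightarrow> complex) \<Rightarrow> (complex \<Rightarrow> complex) \<Rightarrow> complex)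
     \<Rightarrow> complex \<Rightarrow> nat \<Rightarrow> bool" where
  "reproducible_order \<Omega> H ip \<beta> m \<longleftrightarrow>
     (\<exists>L :: (complex \<Rightarrow> complex) \<Rightarrow> complex.
        (\<forall>f\<in>H. \<forall>g\<in>H. L (\<lambda>z. f z + g z) = L f + L g) \<and>
        (\<forall>c. \<forall>f\<in>H. L (\<lambda>z. c * f z) = c * L f) \<and>
        (\<exists>C. \<forall>f\<in>H. norm (L f) \<le> C * hnorm ip f) \<and>
        (\<forall>p. L (polyH \<Omega> p) = poly ((pderiv ^^ m) p) \<beta>))"

definition kern ::
  "complex set \<Rightarrow> (complex \<Rightarrow> complex) set
     \<Rightarrow> ((complex \<Rightarrow> complex) \<Rightarrow> (complex \<Rightarrow> complex) \<Rightarrow> complex)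
     \<Rightarrow> complex \<Rightarrow> nat \<Rightarrow> (complex \<Rightarrow> complex)" where
  "kern \<Omega> H ip \<beta> m =
     (THE k. k \<in> H \<and> (\<forall>p. ip (polyH \<Omega> p) k = poly ((pderiv ^^ m) p) \<beta>))"

text \<open>The value g^(m)(\<beta>) of the extended functional at g.\<close>
definition ext_deriv ::
  "complex set \<Rightarrow> (complex \<Rightarrow> complex) set
     \<Rightarrow> ((complex \<Rightarrow> complex) \<Rightarrow> (complex \<Rightarrow> complex) \<Rightarrow> complex)
     \<Rightarrow> (complex \<Rightarrow> complex) \<Rightarrow> complex \<Rightarrow> nat \<Rightarrow> complex" where
  "ext_deriv \<Omega> H ip g \<beta> m = ip g (kern \<Omega> H ip \<beta> m)"

definition reproducible_multiset ::
  "complex set \<Rightarrow> (complex \<Rightarrow> complex) set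
     \<Rightarrow> ((complex \<Rightarrow> complex) \<Rightarrow> (complex \<Rightarrow> complex) \<Rightarrow> complex)
     \<Rightarrow> complex multiset \<Rightarrow> bool" where
  "reproducible_multiset \<Omega> H ip Z \<longleftrightarrow>
     (\<forall>\<beta> \<in># Z. \<beta> \<noteq> 0 \<longrightarrow> reproducible_order \<Omega> H ip \<beta> (count Z \<beta> - 1))"

definition ldet :: "nat \<Rightarrow> (nat \<Rightarrow> nat \<Rightarrow> complex) \<Rightarrow> complex" where
  "ldet N a = (\<Sum>\<sigma> \<in> {\<sigma>. \<sigma> permutes {..<N}}. of_int (sign \<sigma>) * (\<Prod>i<N. a i (\<sigma> i)))"

text \<open>Formal determinant D(u; v_1, ..., v_N), expanded along the first column.
  Rows are indexed 0..N (row 0 belongs to u), the scalar columns 0..<N.\<close>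
definition formal_det ::
  "((complex \<Rightarrow> complex) \<Rightarrow> (complex \<Rightarrow> complex) \<Rightarrow> complex)
     \<Rightarrow> (complex \<Rightarrow> complex) \<Rightarrow> (complex \<Rightarrow> complex) list \<Rightarrow> (complex \<Rightarrow> complex)" where
  "formal_det ip u vs =
     (let N = length vs; w = (\<lambda>i. (u # vs) ! i);
          skip = (\<lambda>i r. if r < i then r else Suc r)
      in (\<lambda>z. \<Sum>i\<le>N. (-1) ^ i * ldet N (\<lambda>r j. ip (w (skip i r)) (vs ! j)) * w i z))"

text \<open>Shapiro--Shields function of a reproducible multiset Z. The nonzero
  points are listed in an (arbitrary, fixed) order; the result does not
  depend on this order.\<close>
definition shapiro_shields ::
  "complex set \<Rightarrow> (complex \<Rightarrow> complex) set
     \<Rightarrow> ((complex \<Rightarrow> complex) \<Rightarrow> (complex \<Rightarrow> complex) \<Rightarrow> complex)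
     \<Rightarrow> complex multiset \<Rightarrow> (complex \<Rightarrow> complex)" where
  "shapiro_shields \<Omega> H ip Z =
     (let k = kern \<Omega> H ip;
          bs = (SOME xs. distinct xs \<and> set xs = set_mset Z - {0});
          blk = (\<lambda>\<beta>. rev (map (k \<beta>) [0..<count Z \<beta>]))
      in formal_det ip (k 0 (count Z 0)) (blk 0 @ concat (map blk bs)))"

definition zero_mult ::
  "complex set \<Rightarrow> (complex \<Rightarrow> complex) set
     \<Rightarrow> ((complex \<Rightarrow> complex) \<Rightarrow> (complex \<Rightarrow> complex) \<Rightarrow> complex)
     \<Rightarrow> (complex \<Rightarrow> complex) \<Rightarrow> complex \<Rightarrow> enat" where
  "zero_mult \<Omega> H ip f \<beta> =
     (if \<beta> \<in> \<Omega> then Sup {enat m | m. \<forall>l<m. (deriv ^^ l) f \<beta> = 0}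
      else Sup {enat m | m. (m = 0 \<or> reproducible_order \<Omega> H ip \<beta> (m - 1)) \<and>
                            (\<forall>l<m. ext_deriv \<Omega> H ip f \<beta> l = 0)})"

end

theory Submission
  imports Defs Jordan_Normal_Form.Determinant
begin

(* For S = D(u; v_1, ..., v_N), the inner product with each v_j is a determinant with two equal
   columns, so S is orthogonal to all v_j; and S = G u + (a combination of the v_j), where the Gram
   determinant G of the v_j vanishes exactly when the v_j are dependent.
   The zeros of S_A at the points of B say that S_A is orthogonal to the kernels listed by B. If 0
   has the same multiplicity in A and B, then S_A and S_B share u: either G_B = 0, and S_B is a
   combination of vectors it is orthogonal to, hence 0; or G_B S_A - G_A S_B is such a combination
   and vanishes. If 0 has higher multiplicity in B, the u of S_A is one of the kernels of B, so
   S_A = 0; this makes the kernels of B dependent, whence S_B = 0.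
   The kernels exist by the Riesz representation theorem; at points of the domain the derivative
   evaluations are bounded by Baire category and the Cauchy inequalities. *)


section \<open>Polynomials\<close>

lemma higher_deriv_poly: "(deriv ^^ m) (poly p) = poly ((pderiv ^^ m) p)"
proof (induction m)
  case (Suc m)
  have "(deriv ^^ Suc m) (poly p) = deriv (poly ((pderiv ^^ m) p))"
    using Suc by simp
  also have "\<dots> = poly (pderiv ((pderiv ^^ m) p))"
    by (rule ext, rule DERIV_imp_deriv, rule poly_DERIV)
  finally show ?case by simp
qed simp

lemma funpow_pderiv_pCons_0:
  "(pderiv ^^ Suc n) (pCons 0 p) =
     pCons 0 ((pderiv ^^ Suc n) p) + Polynomial.smult (of_nat (Suc n)) ((pderiv ^^ n) p)"
proof (induction n)
  case 0
  then show ?case by (simp add: pderiv_pCons add.commute)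
next
  case (Suc n)
  have "(pderiv ^^ Suc (Suc n)) (pCons 0 p) =
      pderiv (pCons 0 ((pderiv ^^ Suc n) p)) + Polynomial.smult (of_nat (Suc n)) (pderiv ((pderiv ^^ n) p))"
    using Suc by (simp add: pderiv_add pderiv_smult)
  also have "pderiv (pCons 0 ((pderiv ^^ Suc n) p)) =
      (pderiv ^^ Suc n) p + pCons 0 ((pderiv ^^ Suc (Suc n)) p)"
    by (simp add: pderiv_pCons)
  finally show ?case by (simp add: algebra_simps smult_add_left)
qed

lemma poly_funpow_pderiv_pCons_0:
  "poly ((pderiv ^^ Suc n) (pCons 0 p)) b =
     b * poly ((pderiv ^^ Suc n) p) b + of_nat (Suc n) * poly ((pderiv ^^ n) p) b"
  unfolding funpow_pderiv_pCons_0 by simp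

lemma polyH_pCons_0: "polyH \<Omega> (pCons 0 p) = (\<lambda>z. z * polyH \<Omega> p z)"
  unfolding polyH_def by (simp add: fun_eq_iff)


section \<open>Determinants and linear dependence\<close>

lemma ldet_eq_det: "ldet N a = Determinant.det (Matrix.mat N N (\<lambda>(i, j). a i j))"
  using det_def'[of "Matrix.mat N N (\<lambda>(i, j). a i j)" N] unfolding ldet_def
  by (simp add: atLeast0LessThan)

text \<open>Expanding along the first column a matrix whose first column repeats column j0 + 1.\<close>

lemma cofactor_expansion_repeated_column:
  fixes e :: "nat \<Rightarrow> nat \<Rightarrow> complex"
  assumes "j0 < N"
  shows "(\<Sum>i\<le>N. (-1) ^ i * ldet N (\<lambda>r j. e (if r < i then r else Suc r) j) * e i j0) = 0"
proof -
  define E where "E = Matrix.mat (Suc N) (Suc N) (\<lambda>(i, c). if c = 0 then e i j0 else e i (c - 1))"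
  have E: "E \<in> carrier_mat (Suc N) (Suc N)" unfolding E_def by simp
  have "Determinant.det E = 0"
    using assms by (intro det_identical_columns[OF E, of 0 "Suc j0"]) (auto simp: E_def col_mat)
  moreover have "Determinant.det E = (\<Sum>i<Suc N. E $$ (i, 0) * cofactor E i 0)"
    by (rule laplace_expansion_column[OF E]) simp
  moreover have "cofactor E i 0 = (-1) ^ i * ldet N (\<lambda>r j. e (if r < i then r else Suc r) j)"
    if "i < Suc N" for i
    unfolding cofactor_def ldet_eq_det mat_delete_def
    by (rule arg_cong2[where f = "(*)"], simp, rule arg_cong[where f = Determinant.det])
       (auto simp: E_def)
  ultimately show ?thesis
    by (simp add: E_def lessThan_Suc_atMost[symmetric] mult.commute mult.left_commute)
qed

lemma sum_set_conv_sum_nth: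
  assumes "distinct P"
  shows "(\<Sum>p\<in>set P. g p) = (\<Sum>j<length P. g (P ! j))"
proof -
  have "inj_on ((!) P) {..<length P}" using assms by (simp add: inj_on_nth)
  moreover have "(!) P ` {..<length P} = set P" by (auto simp: in_set_conv_nth)
  ultimately show ?thesis using sum.reindex[of "(!) P" "{..<length P}" g] by simp
qed

lemma sum_nth_conv_sum_set:
  assumes "distinct P"
  shows "(\<Sum>j<length P. b j * f (P ! j)) = (\<Sum>p\<in>set P. b (inv_into {..<length P} ((!) P) p) * f p)"
  using assms by (simp add: sum_set_conv_sum_nth inv_into_f_f inj_on_nth)

lemma sum_extend_by_zero:
  fixes a f :: "'p \<Rightarrow> 'a :: comm_semiring_0"
  assumes "finite J" "I \<subseteq> J"
  shows "(\<Sum>p\<in>I. a p * f p) = (\<Sum>p\<in>J. (if p \<in> I then a p else 0) * f p)"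
  by (rule sum.mono_neutral_cong_right[OF assms, symmetric]) auto

definition dependent_family :: "('p \<Rightarrow> complex \<Rightarrow> complex) \<Rightarrow> 'p set \<Rightarrow> bool" where
  "dependent_family K I \<longleftrightarrow> (\<exists>e. (\<exists>p\<in>I. e p \<noteq> 0) \<and> (\<lambda>z. \<Sum>p\<in>I. e p * K p z) = (\<lambda>_. 0))"

lemma dependent_family_mono:
  assumes "finite J" "I \<subseteq> J" and "dependent_family K I"
  shows "dependent_family K J"
proof -
  obtain e where e: "\<exists>p\<in>I. e p \<noteq> 0" "(\<lambda>z. \<Sum>p\<in>I. e p * K p z) = (\<lambda>_. 0)"
    using assms(3) unfolding dependent_family_def by blast
  show ?thesis
    unfolding dependent_family_def
  proof (intro exI conjI)
    show "\<exists>p\<in>J. (if p \<in> I then e p else 0) \<noteq> 0" using e(1) assms(2) by auto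
    show "(\<lambda>z. \<Sum>p\<in>J. (if p \<in> I then e p else 0) * K p z) = (\<lambda>_. 0)"
      using e(2) sum_extend_by_zero[OF assms(1,2), of e] by (simp add: fun_eq_iff)
  qed
qed

lemma dependent_family_set_iff:
  assumes "distinct P"
  shows "dependent_family K (set P) \<longleftrightarrow>
           (\<exists>c. (\<exists>j<length P. c j \<noteq> 0) \<and> (\<lambda>z. \<Sum>j<length P. c j * K (P ! j) z) = (\<lambda>_. 0))"
proof
  assume "dependent_family K (set P)"
  then obtain e where "\<exists>p\<in>set P. e p \<noteq> 0" "(\<lambda>z. \<Sum>p\<in>set P. e p * K p z) = (\<lambda>_. 0)"
    unfolding dependent_family_def by blast
  then show "\<exists>c. (\<exists>j<length P. c j \<noteq> 0) \<and> (\<lambda>z. \<Sum>j<length P. c j * K (P ! j) z) = (\<lambda>_. 0)"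
    using assms by (intro exI[of _ "\<lambda>j. e (P ! j)"]) (auto simp: in_set_conv_nth sum_set_conv_sum_nth)
next
  assume "\<exists>c. (\<exists>j<length P. c j \<noteq> 0) \<and> (\<lambda>z. \<Sum>j<length P. c j * K (P ! j) z) = (\<lambda>_. 0)"
  then obtain c j where c: "j < length P" "c j \<noteq> 0" "(\<lambda>z. \<Sum>j<length P. c j * K (P ! j) z) = (\<lambda>_. 0)"
    by blast
  define idx where "idx = inv_into {..<length P} ((!) P)"
  have "idx (P ! j) = j" unfolding idx_def using c(1) assms by (simp add: inv_into_f_f inj_on_nth)
  then have "\<exists>p\<in>set P. c (idx p) \<noteq> 0" using c(1,2) nth_mem by metis
  moreover have "(\<Sum>p\<in>set P. c (idx p) * K p z) = 0" for z
    using sum_nth_conv_sum_set[OF assms, of c "\<lambda>p. K p z"] c(3) unfolding idx_def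
    by (simp add: fun_eq_iff)
  ultimately show "dependent_family K (set P)"
    unfolding dependent_family_def by (intro exI[of _ "\<lambda>p. c (idx p)"]) auto
qed

definition gram :: "((complex \<Rightarrow> complex) \<Rightarrow> (complex \<Rightarrow> complex) \<Rightarrow> complex)
    \<Rightarrow> (complex \<Rightarrow> complex) list \<Rightarrow> complex" where
  "gram ip vs = ldet (length vs) (\<lambda>r j. ip (vs ! r) (vs ! j))"

lemma formal_det_expansion:
  "formal_det ip u vs = (\<lambda>z. gram ip vs * u z +
     (\<Sum>j<length vs. (-1) ^ Suc j *
        ldet (length vs) (\<lambda>r c. ip ((u # vs) ! (if r < Suc j then r else Suc r)) (vs ! c)) * (vs ! j) z))"
  unfolding formal_det_def gram_def Let_def
  by (simp add: lessThan_Suc_atMost[symmetric] sum.lessThan_Suc_shift del: sum.lessThan_Suc)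

definition gram_matrix :: "((complex \<Rightarrow> complex) \<Rightarrow> (complex \<Rightarrow> complex) \<Rightarrow> complex)
    \<Rightarrow> (complex \<Rightarrow> complex) list \<Rightarrow> complex mat" where
  "gram_matrix ip vs = Matrix.mat (length vs) (length vs) (\<lambda>(r, j). ip (vs ! r) (vs ! j))"

lemma gram_eq_det_gram_matrix: "gram ip vs = Determinant.det (gram_matrix ip vs)"
  unfolding gram_def gram_matrix_def ldet_eq_det ..


section \<open>Listing the kernels of a multiset\<close>

text \<open>The pair (\<beta>, j) stands for the kernel k_\<beta>^(j), listed in the order in which
  shapiro_shields passes the kernels to formal_det.\<close>

definition nonzero_points :: "complex multiset \<Rightarrow> complex list" where
  "nonzero_points Z = (SOME xs. distinct xs \<and> set xs = set_mset Z - {0})"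

definition kernel_block :: "complex multiset \<Rightarrow> complex \<Rightarrow> (complex \<times> nat) list" where
  "kernel_block Z \<beta> = rev (map (\<lambda>j. (\<beta>, j)) [0..<count Z \<beta>])"

definition kernel_indices :: "complex multiset \<Rightarrow> (complex \<times> nat) list" where
  "kernel_indices Z = kernel_block Z 0 @ concat (map (kernel_block Z) (nonzero_points Z))"

lemma
  shows distinct_nonzero_points: "distinct (nonzero_points Z)"
    and set_nonzero_points: "set (nonzero_points Z) = set_mset Z - {0}"
proof -
  have "\<exists>xs. distinct xs \<and> set xs = set_mset Z - {0}"
    using finite_distinct_list[of "set_mset Z - {0}"] by auto
  then have "distinct (nonzero_points Z) \<and> set (nonzero_points Z) = set_mset Z - {0}"
    unfolding nonzero_points_def by (rule someI_ex)
  then show "distinct (nonzero_points Z)" "set (nonzero_points Z) = set_mset Z - {0}" by auto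
qed

lemma set_kernel_block: "set (kernel_block Z \<beta>) = {(\<beta>, j) | j. j < count Z \<beta>}"
  unfolding kernel_block_def by auto

lemma distinct_kernel_block: "distinct (kernel_block Z \<beta>)"
  unfolding kernel_block_def by (simp add: distinct_map inj_on_def)

lemma set_kernel_indices: "set (kernel_indices Z) = {(\<beta>, j). j < count Z \<beta>}"
  unfolding kernel_indices_def using set_nonzero_points[of Z]
  by (auto simp: set_kernel_block simp flip: count_greater_zero_iff)

lemma distinct_kernel_indices: "distinct (kernel_indices Z)"
proof -
  have "distinct (concat (map (kernel_block Z) bs))" if "distinct bs" for bs
    using that by (induction bs) (auto simp: distinct_kernel_block set_kernel_block)
  then show ?thesis
    unfolding kernel_indices_def using distinct_nonzero_points[of Z] set_nonzero_points[of Z]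
    by (auto simp: distinct_kernel_block set_kernel_block)
qed

lemma set_kernel_indices_mono: "A \<subseteq># B \<Longrightarrow> set (kernel_indices A) \<subseteq> set (kernel_indices B)"
  unfolding set_kernel_indices subseteq_mset_def by (auto intro: less_le_trans)


section \<open>Hilbert spaces of analytic functions\<close>

text \<open>The standing assumptions in rule form.\<close>

locale analytic_function_space =
  fixes \<Omega> :: "complex set" and H :: "(complex \<Rightarrow> complex) set"
    and ip :: "(complex \<Rightarrow> complex) \<Rightarrow> (complex \<Rightarrow> complex) \<Rightarrow> complex"
  assumes open_domain: "open \<Omega>"
    and zero_in_domain: "0 \<in> \<Omega>"
    and zero_mem [simp]: "(\<lambda>_. 0) \<in> H"
    and add_mem: "f \<in> H \<Longrightarrow> g \<in> H \<Longrightarrow> (\<lambda>z. f z + g z) \<in> H"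
    and scale_mem: "f \<in> H \<Longrightarrow> (\<lambda>z. c * f z) \<in> H"
    and holomorphic_mem: "f \<in> H \<Longrightarrow> f holomorphic_on \<Omega>"
    and ip_add_left: "f \<in> H \<Longrightarrow> g \<in> H \<Longrightarrow> h \<in> H \<Longrightarrow> ip (\<lambda>z. f z + g z) h = ip f h + ip g h"
    and ip_scale_left: "f \<in> H \<Longrightarrow> h \<in> H \<Longrightarrow> ip (\<lambda>z. c * f z) h = c * ip f h"
    and ip_commute: "f \<in> H \<Longrightarrow> g \<in> H \<Longrightarrow> ip g f = cnj (ip f g)"
    and ip_self_nonneg: "f \<in> H \<Longrightarrow> 0 \<le> Re (ip f f)"
    and ip_self_eq_0: "f \<in> H \<Longrightarrow> ip f f = 0 \<Longrightarrow> f = (\<lambda>_. 0)"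
    and complete: "(\<And>n. F n \<in> H) \<Longrightarrow>
        (\<forall>e>0. \<exists>N. \<forall>m\<ge>N. \<forall>n\<ge>N. hnorm ip (\<lambda>z. F m z - F n z) < e) \<Longrightarrow>
        \<exists>f\<in>H. (\<lambda>n. hnorm ip (\<lambda>z. F n z - f z)) \<longlonglongrightarrow> 0"
    and point_eval_bounded: "w \<in> \<Omega> \<Longrightarrow> \<exists>C. \<forall>f\<in>H. norm (f w) \<le> C * hnorm ip f"
    and shift_mem: "f \<in> H \<Longrightarrow> (\<lambda>z. z * f z) \<in> H"
    and shift_bounded: "\<exists>C. \<forall>f\<in>H. hnorm ip (\<lambda>z. z * f z) \<le> C * hnorm ip f"
    and polyH_mem [simp]: "polyH \<Omega> p \<in> H"
    and polyH_dense: "f \<in> H \<Longrightarrow> e > 0 \<Longrightarrow> \<exists>p. hnorm ip (\<lambda>z. f z - polyH \<Omega> p z) < e"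

lemma analytic_function_space_if_analytic_hilbert_space:
  assumes "analytic_hilbert_space \<Omega> H ip"
  shows "analytic_function_space \<Omega> H ip"
  using assms unfolding analytic_hilbert_space_def by (elim conjE) (unfold_locales; (blast | metis))

context analytic_function_space
begin

lemma diff_mem: "f \<in> H \<Longrightarrow> g \<in> H \<Longrightarrow> (\<lambda>z. f z - g z) \<in> H"
  using add_mem[of f "\<lambda>z. (-1) * g z"] scale_mem[of g "-1"] by simp

lemma sum_mem: "(\<And>i. i \<in> I \<Longrightarrow> g i \<in> H) \<Longrightarrow> (\<lambda>z. \<Sum>i\<in>I. c i * g i z) \<in> H"
proof (induction I rule: infinite_finite_induct)
  case (insert x F)
  then have "(\<lambda>z. c x * g x z + (\<Sum>i\<in>F. c i * g i z)) \<in> H"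
    by (intro add_mem scale_mem) simp_all
  with insert show ?case by simp
qed simp_all

lemma ip_zero_left [simp]: "h \<in> H \<Longrightarrow> ip (\<lambda>_. 0) h = 0"
  using ip_scale_left[of "\<lambda>_. 0" h 0] by simp

lemma ip_zero_right [simp]: "h \<in> H \<Longrightarrow> ip h (\<lambda>_. 0) = 0"
  using ip_commute[of h "\<lambda>_. 0"] by simp

lemma ip_diff_left: "f \<in> H \<Longrightarrow> g \<in> H \<Longrightarrow> h \<in> H \<Longrightarrow> ip (\<lambda>z. f z - g z) h = ip f h - ip g h"
  using ip_add_left[of f "\<lambda>z. (-1) * g z" h] ip_scale_left[of g h "-1"] scale_mem[of g "-1"] by simp

lemma ip_add_right: "f \<in> H \<Longrightarrow> g \<in> H \<Longrightarrow> h \<in> H \<Longrightarrow> ip h (\<lambda>z. f z + g z) = ip h f + ip h g"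
  using ip_commute[of "\<lambda>z. f z + g z" h] ip_add_left[of f g h] ip_commute[of f h] ip_commute[of g h]
    add_mem[of f g] by simp

lemma ip_scale_right: "f \<in> H \<Longrightarrow> h \<in> H \<Longrightarrow> ip h (\<lambda>z. c * f z) = cnj c * ip h f"
  using ip_commute[of "\<lambda>z. c * f z" h] ip_scale_left[of f h c] ip_commute[of f h] scale_mem[of f c]
  by simp

lemma ip_diff_right: "f \<in> H \<Longrightarrow> g \<in> H \<Longrightarrow> h \<in> H \<Longrightarrow> ip h (\<lambda>z. f z - g z) = ip h f - ip h g"
  using ip_commute[of "\<lambda>z. f z - g z" h] ip_diff_left[of f g h] ip_commute[of f h] ip_commute[of g h]
    diff_mem[of f g] by simp

lemma ip_sum_left:
  "(\<And>i. i \<in> I \<Longrightarrow> g i \<in> H) \<Longrightarrow> h \<in> H \<Longrightarrow>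
     ip (\<lambda>z. \<Sum>i\<in>I. c i * g i z) h = (\<Sum>i\<in>I. c i * ip (g i) h)"
proof (induction I rule: infinite_finite_induct)
  case (insert x F)
  then have "ip (\<lambda>z. c x * g x z + (\<Sum>i\<in>F. c i * g i z)) h =
      ip (\<lambda>z. c x * g x z) h + ip (\<lambda>z. \<Sum>i\<in>F. c i * g i z) h"
    by (intro ip_add_left sum_mem scale_mem) simp_all
  with insert show ?case by (simp add: ip_scale_left)
qed simp_all

lemma ip_sum_right:
  assumes "\<And>i. i \<in> I \<Longrightarrow> g i \<in> H" and "h \<in> H"
  shows "ip h (\<lambda>z. \<Sum>i\<in>I. c i * g i z) = (\<Sum>i\<in>I. cnj (c i) * ip h (g i))"
proof -
  have "ip h (\<lambda>z. \<Sum>i\<in>I. c i * g i z) = cnj (ip (\<lambda>z. \<Sum>i\<in>I. c i * g i z) h)"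
    using assms by (intro ip_commute sum_mem)
  also have "\<dots> = (\<Sum>i\<in>I. cnj (c i) * ip h (g i))"
    using assms by (simp add: ip_sum_left ip_commute[of _ h])
  finally show ?thesis .
qed

lemma ip_self_real: "f \<in> H \<Longrightarrow> ip f f = of_real (Re (ip f f))"
  using ip_commute[of f f] by (simp add: complex_eq_iff)

lemma hnorm_nonneg: "f \<in> H \<Longrightarrow> 0 \<le> hnorm ip f"
  unfolding hnorm_def using ip_self_nonneg[of f] by simp

lemma le_abs_times_hnorm: "f \<in> H \<Longrightarrow> x \<le> C * hnorm ip f \<Longrightarrow> x \<le> \<bar>C\<bar> * hnorm ip f"
  using mult_right_mono[OF abs_ge_self hnorm_nonneg, of f C] by linarith

lemma hnorm_square: "f \<in> H \<Longrightarrow> (hnorm ip f)\<^sup>2 = Re (ip f f)"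
  unfolding hnorm_def using ip_self_nonneg[of f] by simp

lemma hnorm_eq_0_iff: "f \<in> H \<Longrightarrow> hnorm ip f = 0 \<longleftrightarrow> f = (\<lambda>_. 0)"
  using hnorm_square[of f] ip_self_real[of f] ip_self_eq_0[of f] by (auto simp: hnorm_def)

lemma hnorm_zero [simp]: "hnorm ip (\<lambda>_. 0) = 0"
  using hnorm_eq_0_iff[of "\<lambda>_. 0"] by simp

lemma cauchy_schwarz:
  assumes f: "f \<in> H" and g: "g \<in> H"
  shows "norm (ip f g) \<le> hnorm ip f * hnorm ip g"
proof (cases "g = (\<lambda>_. 0)")
  case True
  then show ?thesis using f by (simp add: hnorm_nonneg hnorm_def)
next
  case False
  define a where "a = Re (ip f f)"
  define b where "b = Re (ip g g)"
  define c where "c = ip f g"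
  have ff: "ip f f = of_real a" and gg: "ip g g = of_real b" and gf: "ip g f = cnj c"
    using ip_self_real[OF f] ip_self_real[OF g] ip_commute[OF f g] by (simp_all add: a_def b_def c_def)
  have "b \<noteq> 0" using ip_self_eq_0[OF g] False gg by auto
  then have b0: "b > 0" using ip_self_nonneg[OF g] b_def by simp
  \<comment> \<open>the component of f orthogonal to g has square norm a - |c|^2 / b\<close>
  define t where "t = c / of_real b"
  define h where "h = (\<lambda>z. f z - t * g z)"
  have tg: "(\<lambda>z. t * g z) \<in> H" using g by (rule scale_mem)
  have hH: "h \<in> H" unfolding h_def using f tg by (rule diff_mem)
  have h_ip: "ip h k = ip f k - t * ip g k" if "k \<in> H" for k
    unfolding h_def using ip_diff_left[OF f tg that] ip_scale_left[OF g that] by simp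
  have ip_h: "ip k h = ip k f - cnj t * ip k g" if "k \<in> H" for k
    unfolding h_def using ip_diff_right[OF f tg that] ip_scale_right[OF g that] by simp
  have "ip h h = ip f h - t * ip g h" by (rule h_ip[OF hH])
  also have "\<dots> = of_real a - cnj t * c - t * (cnj c - cnj t * of_real b)"
    using ip_h[OF f] ip_h[OF g] ff gg gf c_def by simp
  also have "\<dots> = of_real (a - (norm c)\<^sup>2 / b)"
    using b0 by (simp add: t_def field_simps complex_norm_square flip: of_real_power)
  finally have "0 \<le> a - (norm c)\<^sup>2 / b" using ip_self_nonneg[OF hH] by simp
  then have "(norm c)\<^sup>2 \<le> a * b" using b0 by (simp add: field_simps)
  then have "sqrt ((norm c)\<^sup>2) \<le> sqrt (a * b)" by (rule real_sqrt_le_mono)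
  then show ?thesis unfolding c_def a_def b_def hnorm_def by (simp add: real_sqrt_mult)
qed

lemma hnorm_add_square:
  assumes f: "f \<in> H" and g: "g \<in> H"
  shows "(hnorm ip (\<lambda>z. f z + g z))\<^sup>2 = (hnorm ip f)\<^sup>2 + 2 * Re (ip f g) + (hnorm ip g)\<^sup>2"
proof -
  have "ip (\<lambda>z. f z + g z) (\<lambda>z. f z + g z) = ip f f + ip f g + (ip g f + ip g g)"
    using ip_add_left[OF f g add_mem[OF f g]] ip_add_right[OF f g f] ip_add_right[OF f g g] by simp
  moreover have "Re (ip g f) = Re (ip f g)" using ip_commute[OF f g] by simp
  ultimately show ?thesis using f g add_mem[OF f g] by (simp add: hnorm_square)
qed

lemma hnorm_scale: assumes f: "f \<in> H" shows "hnorm ip (\<lambda>z. c * f z) = norm c * hnorm ip f"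
proof -
  have "ip (\<lambda>z. c * f z) (\<lambda>z. c * f z) = (c * cnj c) * ip f f"
    using ip_scale_left[OF f scale_mem[OF f]] ip_scale_right[OF f f] by (simp add: mult.assoc)
  also have "c * cnj c = of_real ((norm c)\<^sup>2)" by (rule complex_norm_square[symmetric])
  finally have "ip (\<lambda>z. c * f z) (\<lambda>z. c * f z) = of_real ((norm c)\<^sup>2) * ip f f" .
  then show ?thesis
    unfolding hnorm_def using ip_self_real[OF f] by (simp add: real_sqrt_mult del: of_real_power)
qed

lemma hnorm_add_le:
  assumes f: "f \<in> H" and g: "g \<in> H"
  shows "hnorm ip (\<lambda>z. f z + g z) \<le> hnorm ip f + hnorm ip g"
proof -
  have "Re (ip f g) \<le> hnorm ip f * hnorm ip g"
    using complex_Re_le_cmod[of "ip f g"] cauchy_schwarz[OF f g] by linarith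
  then have "(hnorm ip (\<lambda>z. f z + g z))\<^sup>2 \<le> (hnorm ip f + hnorm ip g)\<^sup>2"
    unfolding hnorm_add_square[OF f g] by (simp add: power2_sum)
  then show ?thesis by (rule power2_le_imp_le) (simp add: hnorm_nonneg f g)
qed

lemma hnorm_diff_commute:
  assumes "f \<in> H" "g \<in> H"
  shows "hnorm ip (\<lambda>z. f z - g z) = hnorm ip (\<lambda>z. g z - f z)"
  using hnorm_scale[OF diff_mem[OF assms], of "-1"] by simp

lemma hnorm_diff_triangle:
  assumes f: "f \<in> H" and g: "g \<in> H" and h: "h \<in> H"
  shows "hnorm ip (\<lambda>z. f z - h z) \<le> hnorm ip (\<lambda>z. f z - g z) + hnorm ip (\<lambda>z. g z - h z)"
  using hnorm_add_le[OF diff_mem[OF f g] diff_mem[OF g h]] by simp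

lemma parallelogram:
  assumes f: "f \<in> H" and g: "g \<in> H"
  shows "(hnorm ip (\<lambda>z. f z + g z))\<^sup>2 + (hnorm ip (\<lambda>z. f z - g z))\<^sup>2 =
           2 * (hnorm ip f)\<^sup>2 + 2 * (hnorm ip g)\<^sup>2"
proof -
  have "(hnorm ip (\<lambda>z. f z + (-1) * g z))\<^sup>2 = (hnorm ip f)\<^sup>2 - 2 * Re (ip f g) + (hnorm ip g)\<^sup>2"
    using hnorm_add_square[OF f scale_mem[OF g, of "-1"]] ip_scale_right[OF g f, of "-1"]
      hnorm_scale[OF g, of "-1"] by simp
  then show ?thesis using hnorm_add_square[OF f g] by simp
qed


section \<open>The Riesz representation theorem\<close>

definition bounded_linear_functional :: "((complex \<Rightarrow> complex) \<Rightarrow> complex) \<Rightarrow> bool" where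
  "bounded_linear_functional L \<longleftrightarrow>
     (\<forall>f\<in>H. \<forall>g\<in>H. L (\<lambda>z. f z + g z) = L f + L g) \<and>
     (\<forall>c. \<forall>f\<in>H. L (\<lambda>z. c * f z) = c * L f) \<and>
     (\<exists>C. \<forall>f\<in>H. norm (L f) \<le> C * hnorm ip f)"

lemma reproducible_order_iff:
  "reproducible_order \<Omega> H ip \<beta> m \<longleftrightarrow>
     (\<exists>L. bounded_linear_functional L \<and> (\<forall>p. L (polyH \<Omega> p) = poly ((pderiv ^^ m) p) \<beta>))"
  unfolding reproducible_order_def bounded_linear_functional_def by (simp only: conj_assoc)

lemma bounded_linear_functionalI:
  assumes "\<And>f g. f \<in> H \<Longrightarrow> g \<in> H \<Longrightarrow> L (\<lambda>z. f z + g z) = L f + L g"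
    and "\<And>c f. f \<in> H \<Longrightarrow> L (\<lambda>z. c * f z) = c * L f"
    and "\<And>f. f \<in> H \<Longrightarrow> norm (L f) \<le> C * hnorm ip f"
  shows "bounded_linear_functional L"
  using assms unfolding bounded_linear_functional_def by blast

lemma inverse_Suc_le_1: "inverse (real (Suc n)) \<le> 1"
  by (simp add: inverse_le_1_iff)

lemma Cauchy_if_hnorm_diff_square_le:
  assumes "\<And>m n. (hnorm ip (\<lambda>z. g m z - g n z))\<^sup>2 \<le>
             D * (inverse (real (Suc m)) + inverse (real (Suc n)))"
  shows "\<forall>e>0. \<exists>N. \<forall>m\<ge>N. \<forall>n\<ge>N. hnorm ip (\<lambda>z. g m z - g n z) < e"
proof (intro allI impI)
  fix e :: real assume e: "e > 0"
  have D1: "0 < \<bar>D\<bar> + 1" by simp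
  have "0 < e\<^sup>2 / (2 * (\<bar>D\<bar> + 1))" using e D1 by simp
  then obtain N where N: "inverse (real (Suc N)) < e\<^sup>2 / (2 * (\<bar>D\<bar> + 1))"
    using reals_Archimedean by blast
  show "\<exists>N. \<forall>m\<ge>N. \<forall>n\<ge>N. hnorm ip (\<lambda>z. g m z - g n z) < e"
  proof (intro exI allI impI)
    fix m n assume "N \<le> m" "N \<le> n"
    then have "inverse (real (Suc m)) \<le> inverse (real (Suc N))"
      "inverse (real (Suc n)) \<le> inverse (real (Suc N))"
      by (simp_all add: le_imp_inverse_le)
    then have s: "inverse (real (Suc m)) + inverse (real (Suc n)) \<le> 2 * inverse (real (Suc N))"
      by linarith
    have "(hnorm ip (\<lambda>z. g m z - g n z))\<^sup>2 \<le> D * (inverse (real (Suc m)) + inverse (real (Suc n)))"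
      by (rule assms)
    also have "\<dots> \<le> \<bar>D\<bar> * (inverse (real (Suc m)) + inverse (real (Suc n)))"
      by (intro mult_right_mono) simp_all
    also have "\<dots> \<le> (\<bar>D\<bar> + 1) * (2 * inverse (real (Suc N)))"
      using s by (intro mult_mono) simp_all
    also have "\<dots> < (\<bar>D\<bar> + 1) * (2 * (e\<^sup>2 / (2 * (\<bar>D\<bar> + 1))))"
      using N D1 by (intro mult_strict_left_mono) simp_all
    also have "\<dots> = e\<^sup>2" using D1 by (simp add: field_simps)
    finally show "hnorm ip (\<lambda>z. g m z - g n z) < e"
      by (rule power2_less_imp_less[OF _ less_imp_le[OF e]])
  qed
qed

context
  fixes L assumes L: "bounded_linear_functional L"
begin

lemma functional_add: "f \<in> H \<Longrightarrow> g \<in> H \<Longrightarrow> L (\<lambda>z. f z + g z) = L f + L g"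
  using L unfolding bounded_linear_functional_def by blast

lemma functional_scale: "f \<in> H \<Longrightarrow> L (\<lambda>z. c * f z) = c * L f"
  using L unfolding bounded_linear_functional_def by blast

lemma functional_bounded:
  obtains C where "C \<ge> 0" "\<And>f. f \<in> H \<Longrightarrow> norm (L f) \<le> C * hnorm ip f"
proof -
  obtain C where C: "\<And>f. f \<in> H \<Longrightarrow> norm (L f) \<le> C * hnorm ip f"
    using L unfolding bounded_linear_functional_def by blast
  have "norm (L f) \<le> \<bar>C\<bar> * hnorm ip f" if "f \<in> H" for f
    using le_abs_times_hnorm[OF that C[OF that]] .
  then show thesis by (intro that[of "\<bar>C\<bar>"]) simp_all
qed

lemma functional_zero: "L (\<lambda>_. 0) = 0"
  using functional_scale[OF zero_mem, of 0] by simp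

lemma functional_diff: "f \<in> H \<Longrightarrow> g \<in> H \<Longrightarrow> L (\<lambda>z. f z - g z) = L f - L g"
  using functional_add[of f "\<lambda>z. (-1) * g z"] functional_scale[of g "-1"] scale_mem[of g "-1"] by simp

lemma functional_limit:
  assumes g: "\<And>n. g n \<in> H" and k: "k \<in> H"
    and lim: "(\<lambda>n. hnorm ip (\<lambda>z. g n z - k z)) \<longlonglongrightarrow> 0" and Lg: "\<And>n. L (g n) = c"
  shows "L k = c"
proof -
  obtain C where C: "C \<ge> 0" "\<And>f. f \<in> H \<Longrightarrow> norm (L f) \<le> C * hnorm ip f"
    using functional_bounded by blast
  have "norm (L k - c) \<le> C * hnorm ip (\<lambda>z. g n z - k z)" for n
    using C(2)[OF diff_mem[OF g[of n] k]] functional_diff[OF g[of n] k] Lg[of n]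
    by (simp add: norm_minus_commute)
  moreover have "(\<lambda>n. C * hnorm ip (\<lambda>z. g n z - k z)) \<longlonglongrightarrow> 0"
    using tendsto_mult_right_zero[OF lim] by simp
  ultimately have "norm (L k - c) \<le> 0" by (intro LIMSEQ_le_const[of _ 0]) auto
  then show ?thesis by simp
qed

text \<open>The parallelogram law makes minimising sequences on the hyperplane L = 1 Cauchy.\<close>

lemma level_set_hnorm_diff_square_le:
  assumes g: "g \<in> H" "L g = 1" and g': "g' \<in> H" "L g' = 1"
    and \<delta>: "\<And>h. h \<in> H \<Longrightarrow> L h = 1 \<Longrightarrow> \<delta> \<le> hnorm ip h" "0 \<le> \<delta>"
    and a: "hnorm ip g \<le> \<delta> + a" "0 \<le> a" "a \<le> 1"
    and b: "hnorm ip g' \<le> \<delta> + b" "0 \<le> b" "b \<le> 1"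
  shows "(hnorm ip (\<lambda>z. g z - g' z))\<^sup>2 \<le> (4 * \<delta> + 2) * (a + b)"
proof -
  define h where "h = (\<lambda>z. (1/2) * (g z + g' z))"
  have hH: "h \<in> H" unfolding h_def using g g' by (intro scale_mem add_mem)
  have "L h = 1"
    unfolding h_def using functional_scale[OF add_mem[OF g(1) g'(1)], of "1/2"]
      functional_add[OF g(1) g'(1)] g g' by simp
  then have "\<delta> \<le> hnorm ip h" using \<delta>(1) hH by blast
  moreover have "(\<lambda>z. g z + g' z) = (\<lambda>z. 2 * h z)" unfolding h_def by (simp add: fun_eq_iff)
  then have "hnorm ip (\<lambda>z. g z + g' z) = 2 * hnorm ip h" using hnorm_scale[OF hH, of 2] by simp
  ultimately have sum: "4 * \<delta>\<^sup>2 \<le> (hnorm ip (\<lambda>z. g z + g' z))\<^sup>2"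
    using \<delta>(2) by (simp add: power_mono power_mult_distrib)
  have "(hnorm ip g)\<^sup>2 \<le> (\<delta> + a)\<^sup>2" "(hnorm ip g')\<^sup>2 \<le> (\<delta> + b)\<^sup>2"
    using a b g g' hnorm_nonneg by (simp_all add: power_mono)
  then have "(hnorm ip (\<lambda>z. g z - g' z))\<^sup>2 \<le> 2 * (\<delta> + a)\<^sup>2 + 2 * (\<delta> + b)\<^sup>2 - 4 * \<delta>\<^sup>2"
    using parallelogram[OF g(1) g'(1)] sum by linarith
  also have "\<dots> = 4 * \<delta> * a + 2 * a * a + 4 * \<delta> * b + 2 * b * b"
    by (simp add: power2_eq_square algebra_simps)
  also have "\<dots> \<le> 4 * \<delta> * a + 2 * a + 4 * \<delta> * b + 2 * b"
    using a b by (intro add_mono mult_left_le) simp_all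
  finally show ?thesis by (simp add: algebra_simps)
qed

lemma min_hnorm_on_level_set_if_minimising:
  assumes \<delta>_le: "\<And>h. h \<in> H \<Longrightarrow> L h = 1 \<Longrightarrow> \<delta> \<le> hnorm ip h" and \<delta>0: "0 \<le> \<delta>"
    and g: "\<And>n. g n \<in> H" "\<And>n. L (g n) = 1"
    and g_small: "\<And>n. hnorm ip (g n) \<le> \<delta> + inverse (real (Suc n))"
  shows "\<exists>k\<in>H. L k = 1 \<and> hnorm ip k \<le> \<delta>"
proof -
  have "(hnorm ip (\<lambda>z. g m z - g n z))\<^sup>2 \<le>
      (4 * \<delta> + 2) * (inverse (real (Suc m)) + inverse (real (Suc n)))" for m n
    by (rule level_set_hnorm_diff_square_le[OF g(1,2) g(1,2) \<delta>_le \<delta>0 g_small _ inverse_Suc_le_1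
          g_small _ inverse_Suc_le_1]) simp_all
  then have "\<forall>e>0. \<exists>N. \<forall>m\<ge>N. \<forall>n\<ge>N. hnorm ip (\<lambda>z. g m z - g n z) < e"
    by (rule Cauchy_if_hnorm_diff_square_le)
  then obtain k where k: "k \<in> H" and lim: "(\<lambda>n. hnorm ip (\<lambda>z. g n z - k z)) \<longlonglongrightarrow> 0"
    using complete[of g] g(1) by blast
  have bound: "hnorm ip k \<le> \<delta> + inverse (real (Suc n)) + hnorm ip (\<lambda>z. g n z - k z)" for n
    using hnorm_add_le[OF g(1)[of n] diff_mem[OF k g(1)[of n]]] hnorm_diff_commute[OF g(1)[of n] k]
      g_small[of n] by simp
  have "(\<lambda>n. \<delta> + inverse (real (Suc n)) + hnorm ip (\<lambda>z. g n z - k z)) \<longlonglongrightarrow> \<delta> + 0 + 0"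
    by (intro tendsto_add tendsto_const LIMSEQ_inverse_real_of_nat lim)
  then have "hnorm ip k \<le> \<delta>" using LIMSEQ_le_const bound by fastforce
  moreover have "L k = 1" by (rule functional_limit[OF g(1) k lim g(2)])
  ultimately show ?thesis using k by blast
qed

lemma exists_min_hnorm_on_level_set:
  assumes f1: "f1 \<in> H" "L f1 \<noteq> 0"
  shows "\<exists>k\<in>H. L k = 1 \<and> (\<forall>h\<in>H. L h = 1 \<longrightarrow> hnorm ip k \<le> hnorm ip h)"
proof -
  define M where "M = {g \<in> H. L g = 1}"
  define \<delta> where "\<delta> = Inf (hnorm ip ` M)"
  have "L (\<lambda>z. (1 / L f1) * f1 z) = 1"
    using functional_scale[OF f1(1), of "1 / L f1"] f1(2) by simp
  then have M: "M \<noteq> {}" unfolding M_def using scale_mem[OF f1(1), of "1 / L f1"] by blast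
  have bdd: "bdd_below (hnorm ip ` M)"
    unfolding M_def by (rule bdd_belowI[of _ 0]) (auto intro: hnorm_nonneg)
  have \<delta>_le: "\<delta> \<le> hnorm ip h" if "h \<in> H" "L h = 1" for h
    unfolding \<delta>_def using that bdd by (intro cInf_lower) (auto simp: M_def)
  have \<delta>0: "0 \<le> \<delta>"
    unfolding \<delta>_def using M by (intro cInf_greatest) (auto simp: M_def intro: hnorm_nonneg)
  have "\<exists>g\<in>M. hnorm ip g < \<delta> + inverse (real (Suc n))" for n
    using cInf_lessD[of "hnorm ip ` M" "\<delta> + inverse (real (Suc n))"] M by (simp add: \<delta>_def)
  then have "\<forall>n. \<exists>g. g \<in> M \<and> hnorm ip g < \<delta> + inverse (real (Suc n))" by blast
  then obtain g where "\<forall>n. g n \<in> M \<and> hnorm ip (g n) < \<delta> + inverse (real (Suc n))"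
    by (metis choice)
  then have g: "\<And>n. g n \<in> H" "\<And>n. L (g n) = 1"
    and g_small: "\<And>n. hnorm ip (g n) \<le> \<delta> + inverse (real (Suc n))"
    by (simp_all add: M_def less_imp_le)
  obtain k where "k \<in> H" "L k = 1" "hnorm ip k \<le> \<delta>"
    using min_hnorm_on_level_set_if_minimising[OF \<delta>_le \<delta>0 g g_small] by blast
  then show ?thesis using \<delta>_le order_trans by blast
qed

lemma min_hnorm_on_level_set_orthogonal:
  assumes k: "k \<in> H" "L k = 1" and min: "\<And>h. h \<in> H \<Longrightarrow> L h = 1 \<Longrightarrow> hnorm ip k \<le> hnorm ip h"
    and n: "n \<in> H" "L n = 0"
  shows "ip k n = 0"
proof -
  define A where "A = (norm (ip k n))\<^sup>2"
  define s where "s = 1 / ((hnorm ip n)\<^sup>2 + 1)"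
  have "0 < (hnorm ip n)\<^sup>2 + 1" by (simp add: add_nonneg_pos)
  then have s0: "s > 0" and sn: "s * (hnorm ip n)\<^sup>2 < 1" unfolding s_def by (simp_all add: field_simps)
  define t where "t = - (of_real s * ip k n)"
  have tn: "(\<lambda>z. t * n z) \<in> H" using n(1) by (rule scale_mem)
  have "L (\<lambda>z. k z + t * n z) = 1"
    using functional_add[OF k(1) tn] functional_scale[OF n(1)] n(2) k(2) by simp
  then have "hnorm ip k \<le> hnorm ip (\<lambda>z. k z + t * n z)" using min add_mem[OF k(1) tn] by blast
  then have "(hnorm ip k)\<^sup>2 \<le> (hnorm ip (\<lambda>z. k z + t * n z))\<^sup>2"
    using hnorm_nonneg[OF k(1)] by (rule power_mono)
  also have "\<dots> = (hnorm ip k)\<^sup>2 - 2 * (s * A) + (s\<^sup>2 * A) * (hnorm ip n)\<^sup>2"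
  proof -
    have "cnj (ip k n) * ip k n = of_real A" unfolding A_def by (metis complex_norm_square mult.commute)
    then have "ip k (\<lambda>z. t * n z) = - of_real (s * A)"
      unfolding ip_scale_right[OF n(1) k(1)] t_def by (simp add: mult.assoc)
    moreover have "norm t = s * sqrt A" unfolding t_def A_def using s0 by (simp add: norm_mult)
    ultimately show ?thesis
      using hnorm_add_square[OF k(1) tn] hnorm_scale[OF n(1), of t] s0
      by (simp add: power_mult_distrib A_def)
  qed
  finally have "0 \<le> s * A * (s * (hnorm ip n)\<^sup>2 - 2)" by (simp add: algebra_simps power2_eq_square)
  then have "A \<le> 0" using s0 sn by (simp add: zero_le_mult_iff mult_le_0_iff)
  then show ?thesis unfolding A_def by simp
qed

theorem riesz_representation: "\<exists>k\<in>H. \<forall>f\<in>H. L f = ip f k"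
proof (cases "\<forall>f\<in>H. L f = 0")
  case True
  then show ?thesis by (intro bexI[of _ "\<lambda>_. 0"]) simp_all
next
  case False
  then obtain k0 where k0: "k0 \<in> H" "L k0 = 1"
    and min: "\<And>h. h \<in> H \<Longrightarrow> L h = 1 \<Longrightarrow> hnorm ip k0 \<le> hnorm ip h"
    using exists_min_hnorm_on_level_set by blast
  define q where "q = ip k0 k0"
  have "q \<noteq> 0" using ip_self_eq_0[OF k0(1)] k0(2) functional_zero unfolding q_def by auto
  have "L f = ip f (\<lambda>z. (1 / q) * k0 z)" if f: "f \<in> H" for f
  proof -
    have lk: "(\<lambda>z. L f * k0 z) \<in> H" using k0(1) by (rule scale_mem)
    have "L (\<lambda>z. f z - L f * k0 z) = 0"
      using functional_diff[OF f lk] functional_scale[OF k0(1)] k0(2) by simp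
    then have "ip k0 (\<lambda>z. f z - L f * k0 z) = 0"
      using min_hnorm_on_level_set_orthogonal[OF k0 min] diff_mem[OF f lk] by blast
    then have "ip k0 f = cnj (L f) * q"
      using ip_diff_right[OF f lk k0(1)] ip_scale_right[OF k0(1) k0(1)] by (simp add: q_def)
    then have "ip f k0 = L f * cnj q" using ip_commute[OF k0(1) f] by simp
    then show ?thesis using ip_scale_right[OF k0(1) f, of "1 / q"] \<open>q \<noteq> 0\<close> by simp
  qed
  then show ?thesis using scale_mem[OF k0(1)] by blast
qed

end


section \<open>Bounded evaluation of derivatives\<close>

lemma bounded_linear_functional_eval:
  assumes "w \<in> \<Omega>"
  shows "bounded_linear_functional (\<lambda>f. f w)"
proof -
  obtain C where "\<forall>f\<in>H. norm (f w) \<le> C * hnorm ip f" using point_eval_bounded[OF assms] by blast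
  then show ?thesis by (intro bounded_linear_functionalI[where C = C]) simp_all
qed

definition hdist :: "(complex \<Rightarrow> complex) \<Rightarrow> (complex \<Rightarrow> complex) \<Rightarrow> real" where
  "hdist f g = (if f \<in> H \<and> g \<in> H then hnorm ip (\<lambda>z. f z - g z) else 0)"

lemma Metric_space_hdist: "Metric_space H hdist"
proof
  fix x y show "0 \<le> hdist x y" unfolding hdist_def using hnorm_nonneg diff_mem by auto
next
  fix x y show "hdist x y = hdist y x" unfolding hdist_def using hnorm_diff_commute by auto
next
  fix x y assume "x \<in> H" "y \<in> H"
  moreover have "(\<lambda>z. x z - y z) = (\<lambda>_. 0) \<longleftrightarrow> x = y" by (auto simp: fun_eq_iff)
  ultimately show "hdist x y = 0 \<longleftrightarrow> x = y"
    unfolding hdist_def using hnorm_eq_0_iff[OF diff_mem] by simp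
next
  fix x y z assume "x \<in> H" "y \<in> H" "z \<in> H"
  then show "hdist x z \<le> hdist x y + hdist y z" unfolding hdist_def using hnorm_diff_triangle by simp
qed

interpretation Hm: Metric_space H hdist by (rule Metric_space_hdist)

lemma mcomplete_hdist: "Hm.mcomplete"
  unfolding Hm.mcomplete_def
proof (intro allI impI)
  fix \<sigma> assume \<sigma>: "Hm.MCauchy \<sigma>"
  then have \<sigma>H: "\<And>n. \<sigma> n \<in> H" unfolding Hm.MCauchy_def by auto
  have "\<forall>e>0. \<exists>N. \<forall>m\<ge>N. \<forall>n\<ge>N. hnorm ip (\<lambda>z. \<sigma> m z - \<sigma> n z) < e"
    using \<sigma> \<sigma>H unfolding Hm.MCauchy_def hdist_def by simp
  then obtain f where f: "f \<in> H" "(\<lambda>n. hnorm ip (\<lambda>z. \<sigma> n z - f z)) \<longlonglongrightarrow> 0"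
    using complete[of \<sigma>] \<sigma>H by blast
  have "limitin Hm.mtopology \<sigma> f sequentially"
    unfolding Hm.limitin_metric
  proof (intro conjI allI impI)
    fix e :: real assume "e > 0"
    with f(2) have "\<forall>\<^sub>F n in sequentially. hnorm ip (\<lambda>z. \<sigma> n z - f z) < e"
      by (rule order_tendstoD(2))
    then show "\<forall>\<^sub>F n in sequentially. \<sigma> n \<in> H \<and> hdist (\<sigma> n) f < e"
      by eventually_elim (simp add: hdist_def \<sigma>H f(1))
  qed (rule f(1))
  then show "\<exists>x. limitin Hm.mtopology \<sigma> x sequentially" by blast
qed

lemma closedin_bounded_on:
  assumes "K \<subseteq> \<Omega>"
  shows "closedin Hm.mtopology {f \<in> H. \<forall>w\<in>K. norm (f w) \<le> c}"
  unfolding Hm.metric_closedin_iff_sequentially_closed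
proof (intro conjI allI impI)
  fix \<sigma> l assume "range \<sigma> \<subseteq> {f \<in> H. \<forall>w\<in>K. norm (f w) \<le> c} \<and> limitin Hm.mtopology \<sigma> l sequentially"
  then have \<sigma>: "\<And>k w. w \<in> K \<Longrightarrow> norm (\<sigma> k w) \<le> c" and l: "l \<in> H"
    and conv: "\<And>e. e > 0 \<Longrightarrow> \<forall>\<^sub>F k in sequentially. \<sigma> k \<in> H \<and> hdist (\<sigma> k) l < e"
    unfolding Hm.limitin_metric by auto
  have "norm (l w) \<le> c" if w: "w \<in> K" for w
  proof (rule ccontr)
    assume "\<not> ?thesis"
    then have gap: "norm (l w) - c > 0" by simp
    obtain C where C: "C \<ge> 0" "\<And>f. f \<in> H \<Longrightarrow> norm (f w) \<le> C * hnorm ip f"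
      using functional_bounded[OF bounded_linear_functional_eval] assms w by blast
    define e where "e = (norm (l w) - c) / (C + 1)"
    have "e > 0" unfolding e_def using gap C(1) by simp
    then obtain k where k: "\<sigma> k \<in> H" "hdist (\<sigma> k) l < e"
      using eventually_happens'[OF _ conv] by auto
    have "norm (\<sigma> k w - l w) \<le> C * hnorm ip (\<lambda>z. \<sigma> k z - l z)"
      using C(2)[OF diff_mem[OF k(1) l]] by simp
    also have "\<dots> \<le> C * e" using k l C(1) unfolding hdist_def by (simp add: mult_left_mono)
    also have "\<dots> < norm (l w) - c" unfolding e_def using gap C(1) by (simp add: field_simps)
    finally show False using \<sigma>[OF w, of k] norm_triangle_ineq4[of "\<sigma> k w" "\<sigma> k w - l w"] by simp
  qed
  then show "l \<in> {f \<in> H. \<forall>w\<in>K. norm (f w) \<le> c}" using l by blast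
qed auto

lemma Union_bounded_on:
  assumes "compact K" "K \<subseteq> \<Omega>"
  shows "(\<Union>n. {f \<in> H. \<forall>w\<in>K. norm (f w) \<le> real n}) = H"
proof (intro equalityI subsetI)
  fix f assume f: "f \<in> H"
  have "continuous_on K f"
    using holomorphic_on_imp_continuous_on[OF holomorphic_mem[OF f]] assms(2) continuous_on_subset by blast
  then have "bounded (f ` K)" using assms(1) by (intro compact_imp_bounded compact_continuous_image)
  then obtain B where "\<And>w. w \<in> K \<Longrightarrow> norm (f w) \<le> B" unfolding bounded_iff by blast
  then have "\<forall>w\<in>K. norm (f w) \<le> real (nat \<lceil>B\<rceil>)" by (meson order_trans real_nat_ceiling_ge)
  then show "f \<in> (\<Union>n. {f \<in> H. \<forall>w\<in>K. norm (f w) \<le> real n})" using f by blast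
qed auto

text \<open>Every g is a multiple of the difference of two elements of the ball.\<close>

lemma bounded_on_if_mball_subset:
  assumes x: "x \<in> H" and \<rho>: "\<rho> > 0"
    and ball: "Hm.mball x \<rho> \<subseteq> {f \<in> H. \<forall>w\<in>K. norm (f w) \<le> c}"
    and g: "g \<in> H" and w: "w \<in> K"
  shows "norm (g w) \<le> (4 * c / \<rho>) * hnorm ip g"
proof (cases "g = (\<lambda>_. 0)")
  case True
  then show ?thesis by simp
next
  case False
  then have hg: "hnorm ip g > 0" using hnorm_eq_0_iff[OF g] hnorm_nonneg[OF g] by simp
  define t where "t = \<rho> / (2 * hnorm ip g)"
  have t: "t > 0" unfolding t_def using \<rho> hg by simp
  define h where "h = (\<lambda>z. x z + of_real t * g z)"
  have hH: "h \<in> H" unfolding h_def using x g by (intro add_mem scale_mem)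
  have "(\<lambda>z. x z - h z) = (\<lambda>z. of_real (- t) * g z)" unfolding h_def by (simp add: fun_eq_iff)
  then have "hdist x h = t * hnorm ip g"
    unfolding hdist_def using x hH hnorm_scale[OF g, of "of_real (- t)"] t by simp
  also have "\<dots> < \<rho>" unfolding t_def using \<rho> hg by simp
  finally have "h \<in> Hm.mball x \<rho>" using x hH by simp
  then have "norm (h w) \<le> c" using ball w by blast
  moreover have "norm (x w) \<le> c" using ball x \<rho> w by auto
  ultimately have "t * norm (g w) \<le> 2 * c"
    using norm_triangle_ineq4[of "h w" "x w"] t unfolding h_def by (simp add: norm_mult)
  then have "norm (g w) \<le> 2 * c / t" using t by (simp add: field_simps)
  also have "\<dots> = (4 * c / \<rho>) * hnorm ip g" unfolding t_def using \<rho> hg by (simp add: field_simps)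
  finally show ?thesis .
qed

text \<open>Baire category: the sets of functions bounded by n on K are closed and cover H, so one of
  them contains a ball.\<close>

lemma bounded_evaluation_on_compact:
  assumes "compact K" "K \<subseteq> \<Omega>"
  shows "\<exists>C. \<forall>f\<in>H. \<forall>w\<in>K. norm (f w) \<le> C * hnorm ip f"
proof -
  define F where "F n = {f \<in> H. \<forall>w\<in>K. norm (f w) \<le> real n}" for n :: nat
  have closed: "closedin Hm.mtopology (F n)" for n
    unfolding F_def by (rule closedin_bounded_on[OF assms(2)])
  have cover: "\<Union> (range F) = H"
    unfolding F_def by (rule Union_bounded_on[OF assms])
  have "\<exists>n. Hm.mtopology interior_of F n \<noteq> {}"
  proof (rule ccontr)
    assume "\<not> ?thesis"
    then have "Hm.mtopology interior_of \<Union> (range F) = {}"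
      using closed by (intro Hm.metric_Baire_category_alt[OF mcomplete_hdist] countable_image) auto
    then show False
      using cover zero_mem interior_of_topspace[of Hm.mtopology, unfolded Hm.topspace_mtopology] by simp
  qed
  then obtain n x where "x \<in> Hm.mtopology interior_of F n" by blast
  then obtain T where T: "openin Hm.mtopology T" "x \<in> T" "T \<subseteq> F n"
    unfolding interior_of_def by blast
  then obtain \<rho> where \<rho>: "\<rho> > 0" "Hm.mball x \<rho> \<subseteq> F n"
    using Hm.openin_mtopology by (meson order_trans)
  have x: "x \<in> H" using T unfolding F_def by blast
  have "norm (f w) \<le> (4 * real n / \<rho>) * hnorm ip f" if "f \<in> H" "w \<in> K" for f w
    by (rule bounded_on_if_mball_subset[OF x \<rho>(1) \<rho>(2)[unfolded F_def] that])
  then show ?thesis by blast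
qed

lemma higher_deriv_bounded:
  assumes "\<beta> \<in> \<Omega>"
  shows "\<exists>C. \<forall>f\<in>H. norm ((deriv ^^ m) f \<beta>) \<le> C * hnorm ip f"
proof -
  obtain r where r: "r > 0" "cball \<beta> r \<subseteq> \<Omega>" using open_contains_cball open_domain assms by blast
  obtain C where C: "\<And>f w. f \<in> H \<Longrightarrow> w \<in> cball \<beta> r \<Longrightarrow> norm (f w) \<le> C * hnorm ip f"
    using bounded_evaluation_on_compact[OF compact_cball r(2)] by blast
  have "norm ((deriv ^^ m) f \<beta>) \<le> (fact m * C / r ^ m) * hnorm ip f" if f: "f \<in> H" for f
  proof -
    have "f holomorphic_on ball \<beta> r"
      using holomorphic_mem[OF f] r(2) ball_subset_cball holomorphic_on_subset by blast
    moreover have "continuous_on (cball \<beta> r) f"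
      using holomorphic_on_imp_continuous_on[OF holomorphic_mem[OF f]] r(2) continuous_on_subset by blast
    ultimately have "norm ((deriv ^^ m) f \<beta>) \<le> fact m * (C * hnorm ip f) / r ^ m"
      using C[OF f] r(1) by (intro Cauchy_inequality) (auto simp: dist_norm)
    then show ?thesis by simp
  qed
  then show ?thesis by blast
qed

lemma higher_deriv_representable:
  assumes "\<beta> \<in> \<Omega>"
  shows "\<exists>k\<in>H. \<forall>f\<in>H. (deriv ^^ m) f \<beta> = ip f k"
proof -
  obtain C where C: "\<forall>f\<in>H. norm ((deriv ^^ m) f \<beta>) \<le> C * hnorm ip f"
    using higher_deriv_bounded[OF assms] by blast
  have "bounded_linear_functional (\<lambda>f. (deriv ^^ m) f \<beta>)"
  proof (rule bounded_linear_functionalI)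
    fix f g assume "f \<in> H" "g \<in> H"
    then show "(deriv ^^ m) (\<lambda>z. f z + g z) \<beta> = (deriv ^^ m) f \<beta> + (deriv ^^ m) g \<beta>"
      using higher_deriv_add[OF holomorphic_mem holomorphic_mem open_domain assms] by blast
  next
    fix c f assume "f \<in> H"
    then show "(deriv ^^ m) (\<lambda>z. c * f z) \<beta> = c * (deriv ^^ m) f \<beta>"
      using higher_deriv_cmult[OF holomorphic_mem assms open_domain] by blast
  qed (use C in blast)
  then show ?thesis by (rule riesz_representation)
qed

lemma higher_deriv_polyH:
  assumes "\<beta> \<in> \<Omega>"
  shows "(deriv ^^ m) (polyH \<Omega> p) \<beta> = poly ((pderiv ^^ m) p) \<beta>"
proof -
  have "(deriv ^^ m) (polyH \<Omega> p) \<beta> = (deriv ^^ m) (poly p) \<beta>"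
    by (rule higher_deriv_transform_within_open[OF holomorphic_mem[OF polyH_mem] _ open_domain assms])
       (auto simp: polyH_def intro: holomorphic_intros)
  then show ?thesis by (simp add: higher_deriv_poly)
qed


section \<open>Reproducing kernels\<close>

lemma eq_if_ip_polyH_eq:
  assumes k: "k \<in> H" and k': "k' \<in> H" and eq: "\<And>p. ip (polyH \<Omega> p) k = ip (polyH \<Omega> p) k'"
  shows "k = k'"
proof -
  define e where "e = (\<lambda>z. k z - k' z)"
  have e: "e \<in> H" unfolding e_def using k k' by (rule diff_mem)
  have pe: "ip (polyH \<Omega> p) e = 0" for p
    unfolding e_def using ip_diff_right[OF k k' polyH_mem] eq by simp
  have small: "(hnorm ip e)\<^sup>2 \<le> \<epsilon> * hnorm ip e" if \<epsilon>: "\<epsilon> > 0" for \<epsilon>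
  proof -
    obtain p where p: "hnorm ip (\<lambda>z. e z - polyH \<Omega> p z) < \<epsilon>" using polyH_dense[OF e \<epsilon>] by blast
    have ep: "(\<lambda>z. e z - polyH \<Omega> p z) \<in> H" using e polyH_mem by (rule diff_mem)
    have "ip e e = ip (\<lambda>z. e z - polyH \<Omega> p z) e"
      using ip_diff_left[OF e polyH_mem e] pe by simp
    then have "(hnorm ip e)\<^sup>2 \<le> norm (ip (\<lambda>z. e z - polyH \<Omega> p z) e)"
      using hnorm_square[OF e] complex_Re_le_cmod by metis
    also have "\<dots> \<le> hnorm ip (\<lambda>z. e z - polyH \<Omega> p z) * hnorm ip e" by (rule cauchy_schwarz[OF ep e])
    also have "\<dots> \<le> \<epsilon> * hnorm ip e" using p hnorm_nonneg[OF e] by (simp add: mult_right_mono)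
    finally show ?thesis .
  qed
  have "hnorm ip e = 0"
  proof (rule ccontr)
    assume "hnorm ip e \<noteq> 0"
    then have pos: "hnorm ip e > 0" using hnorm_nonneg[OF e] by simp
    then have "(hnorm ip e)\<^sup>2 \<le> (hnorm ip e / 2) * hnorm ip e" using small[of "hnorm ip e / 2"] by simp
    then show False using pos by (simp add: power2_eq_square)
  qed
  then have "e = (\<lambda>_. 0)" using hnorm_eq_0_iff[OF e] by simp
  then show ?thesis unfolding e_def by (simp add: fun_eq_iff)
qed

lemma kern_eqI:
  assumes "k \<in> H" and "\<And>p. ip (polyH \<Omega> p) k = poly ((pderiv ^^ m) p) \<beta>"
  shows "kern \<Omega> H ip \<beta> m = k"
  unfolding kern_def using assms eq_if_ip_polyH_eq by (intro the_equality) auto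

lemma kern_mem_if_reproducible_order:
  assumes "reproducible_order \<Omega> H ip \<beta> m"
  shows "kern \<Omega> H ip \<beta> m \<in> H"
proof -
  obtain L where L: "bounded_linear_functional L"
    and Lp: "\<And>p. L (polyH \<Omega> p) = poly ((pderiv ^^ m) p) \<beta>"
    using assms unfolding reproducible_order_iff by blast
  obtain k where "k \<in> H" "\<forall>f\<in>H. L f = ip f k" using riesz_representation[OF L] by blast
  then show ?thesis using kern_eqI[of k m \<beta>] Lp by simp
qed

lemma
  assumes "\<beta> \<in> \<Omega>"
  shows kern_mem_if_in_domain: "kern \<Omega> H ip \<beta> m \<in> H"
    and higher_deriv_eq_ip_kern: "f \<in> H \<Longrightarrow> (deriv ^^ m) f \<beta> = ip f (kern \<Omega> H ip \<beta> m)"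
proof -
  obtain k where k: "k \<in> H" "\<forall>f\<in>H. (deriv ^^ m) f \<beta> = ip f k"
    using higher_deriv_representable[OF assms] by blast
  then have "ip (polyH \<Omega> p) k = poly ((pderiv ^^ m) p) \<beta>" for p
    by (metis polyH_mem higher_deriv_polyH[OF assms])
  then have "kern \<Omega> H ip \<beta> m = k" by (rule kern_eqI[OF k(1)])
  then show "kern \<Omega> H ip \<beta> m \<in> H" "f \<in> H \<Longrightarrow> (deriv ^^ m) f \<beta> = ip f (kern \<Omega> H ip \<beta> m)"
    using k by simp_all
qed

text \<open>Since (z p)^(m+1)(\<beta>) = \<beta> p^(m+1)(\<beta>) + (m + 1) p^(m)(\<beta>), a bounded extension of order
  m + 1 yields one of order m through the bounded shift.\<close>

lemma bounded_linear_functional_shift_quotient: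
  assumes L: "bounded_linear_functional L"
  shows "bounded_linear_functional (\<lambda>f. (L (\<lambda>z. z * f z) - \<beta> * L f) / c)"
proof -
  obtain C where C: "C \<ge> 0" "\<And>f. f \<in> H \<Longrightarrow> norm (L f) \<le> C * hnorm ip f"
    using functional_bounded[OF L] by blast
  obtain S where S: "\<And>f. f \<in> H \<Longrightarrow> hnorm ip (\<lambda>z. z * f z) \<le> S * hnorm ip f"
    using shift_bounded by blast
  show ?thesis
  proof (rule bounded_linear_functionalI)
    fix f g assume f: "f \<in> H" and g: "g \<in> H"
    have "(\<lambda>z. z * (f z + g z)) = (\<lambda>z. z * f z + z * g z)" by (simp add: fun_eq_iff algebra_simps)
    then have "L (\<lambda>z. z * (f z + g z)) - \<beta> * L (\<lambda>z. f z + g z) =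
        (L (\<lambda>z. z * f z) - \<beta> * L f) + (L (\<lambda>z. z * g z) - \<beta> * L g)"
      using functional_add[OF L] f g shift_mem by (simp add: algebra_simps)
    then show "(L (\<lambda>z. z * (f z + g z)) - \<beta> * L (\<lambda>z. f z + g z)) / c =
        (L (\<lambda>z. z * f z) - \<beta> * L f) / c + (L (\<lambda>z. z * g z) - \<beta> * L g) / c"
      by (metis add_divide_distrib)
  next
    fix a f assume f: "f \<in> H"
    have "L (\<lambda>z. z * (a * f z)) = a * L (\<lambda>z. z * f z)"
      using functional_scale[OF L shift_mem[OF f], of a] by (simp add: mult.left_commute)
    then show "(L (\<lambda>z. z * (a * f z)) - \<beta> * L (\<lambda>z. a * f z)) / c = a * ((L (\<lambda>z. z * f z) - \<beta> * L f) / c)"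
      using functional_scale[OF L f, of a] by (simp add: right_diff_distrib mult.left_commute)
  next
    fix f assume f: "f \<in> H"
    have "hnorm ip (\<lambda>z. z * f z) \<le> \<bar>S\<bar> * hnorm ip f" using le_abs_times_hnorm[OF f S[OF f]] .
    then have "norm (L (\<lambda>z. z * f z)) \<le> C * (\<bar>S\<bar> * hnorm ip f)"
      using C(2)[OF shift_mem[OF f]] C(1) by (meson mult_left_mono order_trans)
    moreover have "norm (\<beta> * L f) \<le> norm \<beta> * (C * hnorm ip f)"
      using C(2)[OF f] by (simp add: norm_mult mult_left_mono)
    ultimately have "norm (L (\<lambda>z. z * f z) - \<beta> * L f) \<le> (C * \<bar>S\<bar> + norm \<beta> * C) * hnorm ip f"
      using norm_triangle_ineq4[of "L (\<lambda>z. z * f z)" "\<beta> * L f"] by (simp add: algebra_simps)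
    then show "norm ((L (\<lambda>z. z * f z) - \<beta> * L f) / c) \<le>
        ((C * \<bar>S\<bar> + norm \<beta> * C) / norm c) * hnorm ip f"
      by (simp add: norm_divide divide_right_mono)
  qed
qed

lemma reproducible_order_Suc_imp:
  assumes "reproducible_order \<Omega> H ip \<beta> (Suc m)"
  shows "reproducible_order \<Omega> H ip \<beta> m"
proof -
  obtain L where L: "bounded_linear_functional L"
    and Lp: "\<And>p. L (polyH \<Omega> p) = poly ((pderiv ^^ Suc m) p) \<beta>"
    using assms unfolding reproducible_order_iff by blast
  have "(L (\<lambda>z. z * polyH \<Omega> p z) - \<beta> * L (polyH \<Omega> p)) / of_nat (Suc m) = poly ((pderiv ^^ m) p) \<beta>"
    for p
    using Lp[of "pCons 0 p"] Lp[of p] poly_funpow_pderiv_pCons_0[of m p \<beta>]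
      of_nat_eq_0_iff[of "Suc m", where 'a=complex]
    by (simp del: of_nat_Suc funpow.simps add: polyH_pCons_0)
  then show ?thesis
    unfolding reproducible_order_iff using bounded_linear_functional_shift_quotient[OF L] by blast
qed

lemma reproducible_order_le:
  assumes "reproducible_order \<Omega> H ip \<beta> m" and "j \<le> m"
  shows "reproducible_order \<Omega> H ip \<beta> j"
  using assms(2,1) by (induction rule: dec_induct) (simp_all add: reproducible_order_Suc_imp)


section \<open>Gram determinants and formal determinants\<close>

lemma eq_0_if_orthogonal_span:
  assumes K: "\<And>p. p \<in> I \<Longrightarrow> K p \<in> H" and x: "x = (\<lambda>z. \<Sum>p\<in>I. e p * K p z)"
    and orth: "\<And>p. p \<in> I \<Longrightarrow> ip x (K p) = 0"
  shows "x = (\<lambda>_. 0)"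
proof -
  have xH: "x \<in> H" unfolding x using K by (rule sum_mem)
  have "ip x x = (\<Sum>p\<in>I. cnj (e p) * ip x (K p))"
    using ip_sum_right[of I K x e, OF K xH] unfolding x[symmetric] .
  also have "\<dots> = 0" using orth by simp
  finally show ?thesis using ip_self_eq_0[OF xH] by blast
qed

lemma gram_matrix_mult_vec:
  assumes "set vs \<subseteq> H" and "r < length vs"
  shows "(gram_matrix ip vs *\<^sub>v Matrix.vec (length vs) c) $ r =
           ip (vs ! r) (\<lambda>z. \<Sum>j<length vs. cnj (c j) * (vs ! j) z)"
proof -
  have "ip (vs ! r) (\<lambda>z. \<Sum>j<length vs. cnj (c j) * (vs ! j) z) =
      (\<Sum>j<length vs. c j * ip (vs ! r) (vs ! j))"
    using ip_sum_right[of "{..<length vs}" "(!) vs" "vs ! r" "\<lambda>j. cnj (c j)"] assms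
    by (simp add: subset_code(1))
  then show ?thesis using assms(2)
    by (simp add: gram_matrix_def scalar_prod_def Matrix.row_def atLeast0LessThan mult.commute)
qed

lemma dependent_if_gram_eq_0:
  assumes vs: "set vs \<subseteq> H" and "gram ip vs = 0"
  shows "\<exists>c. (\<exists>j<length vs. c j \<noteq> 0) \<and> (\<lambda>z. \<Sum>j<length vs. c j * (vs ! j) z) = (\<lambda>_. 0)"
proof -
  define N where "N = length vs"
  have A: "gram_matrix ip vs \<in> carrier_mat N N" unfolding gram_matrix_def N_def by simp
  obtain v where v: "v \<in> carrier_vec N" "v \<noteq> 0\<^sub>v N" "gram_matrix ip vs *\<^sub>v v = 0\<^sub>v N"
    using det_0_iff_vec_prod_zero[OF A] assms(2) unfolding gram_eq_det_gram_matrix by blast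
  define x where "x = (\<lambda>z. \<Sum>j<N. cnj (v $ j) * (vs ! j) z)"
  have vsH: "\<And>j. j \<in> {..<N} \<Longrightarrow> vs ! j \<in> H" using vs unfolding N_def by auto
  have "v = Matrix.vec N (\<lambda>j. v $ j)" using v(1) by auto
  then have orth: "ip (vs ! r) x = 0" if "r < N" for r
    using gram_matrix_mult_vec[OF vs, of r "\<lambda>j. v $ j"] v(3) that unfolding x_def N_def by simp
  have xH: "x \<in> H" unfolding x_def using vsH by (rule sum_mem)
  have "ip x (vs ! r) = 0" if "r \<in> {..<N}" for r
    using ip_commute[OF xH vsH[OF that]] orth that by simp
  then have "x = (\<lambda>_. 0)" using vsH x_def by (intro eq_0_if_orthogonal_span) auto
  moreover have "\<exists>j<N. v $ j \<noteq> 0"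
  proof (rule ccontr)
    assume "\<not> ?thesis"
    then have "v = 0\<^sub>v N" using v(1) by (intro eq_vecI) auto
    then show False using v(2) by simp
  qed
  ultimately show ?thesis unfolding N_def x_def by (intro exI[of _ "\<lambda>j. cnj (v $ j)"]) auto
qed

lemma gram_eq_0_if_dependent:
  assumes vs: "set vs \<subseteq> H"
    and c: "j < length vs" "c j \<noteq> 0" "(\<lambda>z. \<Sum>j<length vs. c j * (vs ! j) z) = (\<lambda>_. 0)"
  shows "gram ip vs = 0"
proof -
  define N where "N = length vs"
  have A: "gram_matrix ip vs \<in> carrier_mat N N" unfolding gram_matrix_def N_def by simp
  define v where "v = Matrix.vec N (\<lambda>j. cnj (c j))"
  have "v $ j \<noteq> 0" using c(1,2) unfolding v_def N_def by simp
  then have "v \<noteq> 0\<^sub>v N" using c(1) unfolding N_def by auto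
  moreover have "gram_matrix ip vs *\<^sub>v v = 0\<^sub>v N"
  proof (rule eq_vecI)
    fix r assume "r < dim_vec (0\<^sub>v N :: complex vec)"
    then have "r < length vs" unfolding N_def by simp
    moreover have "vs ! r \<in> H" using vs calculation by auto
    ultimately show "(gram_matrix ip vs *\<^sub>v v) $ r = 0\<^sub>v N $ r"
      using gram_matrix_mult_vec[OF vs, of r "\<lambda>j. cnj (c j)"] c(3) unfolding v_def N_def by simp
  qed (simp add: gram_matrix_def N_def)
  moreover have "v \<in> carrier_vec N" unfolding v_def by simp
  ultimately show ?thesis using det_0_iff_vec_prod_zero[OF A] unfolding gram_eq_det_gram_matrix by blast
qed

lemma gram_eq_0_iff:
  assumes "set vs \<subseteq> H"
  shows "gram ip vs = 0 \<longleftrightarrow>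
           (\<exists>c. (\<exists>j<length vs. c j \<noteq> 0) \<and> (\<lambda>z. \<Sum>j<length vs. c j * (vs ! j) z) = (\<lambda>_. 0))"
  using dependent_if_gram_eq_0[OF assms] gram_eq_0_if_dependent[OF assms] by blast

lemma formal_det_mem:
  assumes "u \<in> H" and "set vs \<subseteq> H"
  shows "formal_det ip u vs \<in> H"
proof -
  have "(u # vs) ! i \<in> H" if "i \<le> length vs" for i
    using assms that by (cases i) auto
  then show ?thesis unfolding formal_det_def Let_def by (intro sum_mem) simp
qed

text \<open>The inner product with vs ! j0 replaces the first column of the formal determinant by its
  column j0 + 1.\<close>

lemma ip_formal_det_nth:
  assumes u: "u \<in> H" and vs: "set vs \<subseteq> H" and j0: "j0 < length vs"
  shows "ip (formal_det ip u vs) (vs ! j0) = 0"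
proof -
  define N where "N = length vs"
  define w where "w i = (u # vs) ! i" for i
  have w: "w i \<in> H" if "i \<le> N" for i
    using that u vs unfolding w_def N_def by (cases i) auto
  have "ip (formal_det ip u vs) (vs ! j0) =
      (\<Sum>i\<le>N. ((-1) ^ i * ldet N (\<lambda>r j. ip (w (if r < i then r else Suc r)) (vs ! j))) * ip (w i) (vs ! j0))"
    unfolding formal_det_def Let_def N_def[symmetric] w_def[symmetric]
    using w vs j0 by (intro ip_sum_left) (auto simp: N_def)
  also have "\<dots> = 0"
    using cofactor_expansion_repeated_column[of j0 N "\<lambda>i j. ip (w i) (vs ! j)"] j0 unfolding N_def by simp
  finally show ?thesis .
qed


section \<open>Shapiro--Shields functions\<close>

definition kernel :: "complex \<times> nat \<Rightarrow> complex \<Rightarrow> complex" where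
  "kernel p = kern \<Omega> H ip (fst p) (snd p)"

lemma shapiro_shields_eq:
  "shapiro_shields \<Omega> H ip Z = formal_det ip (kernel (0, count Z 0)) (map kernel (kernel_indices Z))"
  unfolding shapiro_shields_def Let_def kernel_indices_def kernel_block_def kernel_def
    nonzero_points_def[symmetric]
  by (simp add: map_concat rev_map comp_def)

lemma kernel_mem:
  assumes Z: "reproducible_multiset \<Omega> H ip Z" and "j < count Z \<beta> \<or> \<beta> = 0"
  shows "kernel (\<beta>, j) \<in> H"
proof (cases "\<beta> \<in> \<Omega>")
  case True
  then show ?thesis unfolding kernel_def by (simp add: kern_mem_if_in_domain)
next
  case False
  then have j: "j < count Z \<beta>" and "\<beta> \<noteq> 0" using assms(2) zero_in_domain by auto
  then have "reproducible_order \<Omega> H ip \<beta> (count Z \<beta> - 1)"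
    using Z unfolding reproducible_multiset_def by (simp flip: count_greater_zero_iff)
  then have "reproducible_order \<Omega> H ip \<beta> j" using j by (elim reproducible_order_le) simp
  then show ?thesis unfolding kernel_def by (simp add: kern_mem_if_reproducible_order)
qed

lemma kernel_mem_if_index:
  assumes "reproducible_multiset \<Omega> H ip Z" and "p \<in> set (kernel_indices Z)"
  shows "kernel p \<in> H"
  using assms kernel_mem by (cases p) (auto simp: set_kernel_indices)

lemma kernels_subset:
  assumes "reproducible_multiset \<Omega> H ip Z"
  shows "set (map kernel (kernel_indices Z)) \<subseteq> H"
  using kernel_mem_if_index[OF assms] by auto

lemma shapiro_shields_mem:
  assumes "reproducible_multiset \<Omega> H ip Z"
  shows "shapiro_shields \<Omega> H ip Z \<in> H"
  unfolding shapiro_shields_eq using kernel_mem[OF assms] kernels_subset[OF assms]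
  by (intro formal_det_mem) simp_all

lemma shapiro_shields_orthogonal:
  assumes Z: "reproducible_multiset \<Omega> H ip Z" and p: "p \<in> set (kernel_indices Z)"
  shows "ip (shapiro_shields \<Omega> H ip Z) (kernel p) = 0"
proof -
  obtain j where "j < length (kernel_indices Z)" "kernel_indices Z ! j = p"
    using p by (auto simp: in_set_conv_nth)
  then show ?thesis
    unfolding shapiro_shields_eq using ip_formal_det_nth[OF _ kernels_subset[OF Z], of _ j]
      kernel_mem[OF Z] by simp
qed

lemma shapiro_shields_expansion:
  "\<exists>a. shapiro_shields \<Omega> H ip Z = (\<lambda>z. gram ip (map kernel (kernel_indices Z)) * kernel (0, count Z 0) z +
     (\<Sum>p\<in>set (kernel_indices Z). a p * kernel p z))"
proof -
  define P where "P = kernel_indices Z"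
  define u where "u = kernel (0, count Z 0)"
  define b where "b j = (-1) ^ Suc j * ldet (length P)
    (\<lambda>r c. ip ((u # map kernel P) ! (if r < Suc j then r else Suc r)) (map kernel P ! c))" for j
  define a where "a p = b (inv_into {..<length P} ((!) P) p)" for p
  have sum_eq: "(\<Sum>j<length P. b j * (map kernel P ! j) z) = (\<Sum>p\<in>set P. a p * kernel p z)" for z
    unfolding P_def a_def using sum_nth_conv_sum_set[OF distinct_kernel_indices, of b "\<lambda>p. kernel p z"]
    by simp
  have "shapiro_shields \<Omega> H ip Z = (\<lambda>z. gram ip (map kernel P) * u z +
      (\<Sum>j<length P. b j * (map kernel P ! j) z))"
    unfolding shapiro_shields_eq formal_det_expansion b_def P_def u_def by simp
  also have "\<dots> = (\<lambda>z. gram ip (map kernel P) * u z + (\<Sum>p\<in>set P. a p * kernel p z))"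
    by (simp only: sum_eq)
  finally show ?thesis unfolding P_def u_def by blast
qed

lemma gram_kernels_eq_0_iff:
  assumes "reproducible_multiset \<Omega> H ip Z"
  shows "gram ip (map kernel (kernel_indices Z)) = 0 \<longleftrightarrow> dependent_family kernel (set (kernel_indices Z))"
  using gram_eq_0_iff[OF kernels_subset[OF assms]] dependent_family_set_iff[OF distinct_kernel_indices]
  by simp

lemma gram_kernels_eq_0_mono:
  assumes A: "reproducible_multiset \<Omega> H ip A" and B: "reproducible_multiset \<Omega> H ip B"
    and AB: "A \<subseteq># B" and "gram ip (map kernel (kernel_indices A)) = 0"
  shows "gram ip (map kernel (kernel_indices B)) = 0"
  using assms(4) dependent_family_mono[OF List.finite_set set_kernel_indices_mono[OF AB]]
  unfolding gram_kernels_eq_0_iff[OF A] gram_kernels_eq_0_iff[OF B] by blast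

lemma shapiro_shields_eq_0_if_gram_eq_0:
  assumes Z: "reproducible_multiset \<Omega> H ip Z" and "gram ip (map kernel (kernel_indices Z)) = 0"
  shows "shapiro_shields \<Omega> H ip Z = (\<lambda>_. 0)"
proof -
  obtain a where "shapiro_shields \<Omega> H ip Z = (\<lambda>z. \<Sum>p\<in>set (kernel_indices Z). a p * kernel p z)"
    using shapiro_shields_expansion[of Z] assms(2) by auto
  then show ?thesis
    using kernel_mem_if_index[OF Z] shapiro_shields_orthogonal[OF Z]
    by (intro eq_0_if_orthogonal_span) auto
qed

lemma ip_kern_eq_0_if_le_zero_mult:
  assumes f: "f \<in> H" and m: "enat m \<le> zero_mult \<Omega> H ip f \<beta>" and l: "l < m"
  shows "ip f (kern \<Omega> H ip \<beta> l) = 0"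
proof -
  have l_less: "enat l < zero_mult \<Omega> H ip f \<beta>" using l m by (meson enat_ord_simps(2) order.strict_trans2)
  show ?thesis
  proof (cases "\<beta> \<in> \<Omega>")
    case True
    then have "enat l < Sup {enat m | m. \<forall>l<m. (deriv ^^ l) f \<beta> = 0}"
      using l_less unfolding zero_mult_def by simp
    then obtain m' where "l < m'" "\<forall>l<m'. (deriv ^^ l) f \<beta> = 0" by (auto simp: less_Sup_iff)
    then show ?thesis using higher_deriv_eq_ip_kern[OF True f] by simp
  next
    case False
    then have "enat l < Sup {enat m | m. (m = 0 \<or> reproducible_order \<Omega> H ip \<beta> (m - 1)) \<and>
        (\<forall>l<m. ext_deriv \<Omega> H ip f \<beta> l = 0)}"
      using l_less unfolding zero_mult_def by simp
    then obtain m' where "l < m'" "\<forall>l<m'. ext_deriv \<Omega> H ip f \<beta> l = 0" by (auto simp: less_Sup_iff)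
    then show ?thesis unfolding ext_deriv_def by simp
  qed
qed

context
  fixes A B
  assumes A: "reproducible_multiset \<Omega> H ip A" and B: "reproducible_multiset \<Omega> H ip B"
    and AB: "A \<subseteq># B"
    and orth: "\<And>p. p \<in> set (kernel_indices B) \<Longrightarrow> ip (shapiro_shields \<Omega> H ip A) (kernel p) = 0"
begin

lemma shapiro_shields_proportional_if_count_0_eq:
  assumes "count A 0 = count B 0"
  shows "\<exists>c. shapiro_shields \<Omega> H ip B = (\<lambda>z. c * shapiro_shields \<Omega> H ip A z)"
proof -
  define SA SB where "SA = shapiro_shields \<Omega> H ip A" and "SB = shapiro_shields \<Omega> H ip B"
  define PA PB where "PA = set (kernel_indices A)" and "PB = set (kernel_indices B)"
  define GA GB where "GA = gram ip (map kernel (kernel_indices A))"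
    and "GB = gram ip (map kernel (kernel_indices B))"
  obtain aA where SA: "SA = (\<lambda>z. GA * kernel (0, count B 0) z + (\<Sum>p\<in>PA. aA p * kernel p z))"
    using shapiro_shields_expansion[of A] assms unfolding SA_def GA_def PA_def by auto
  obtain aB where SB: "SB = (\<lambda>z. GB * kernel (0, count B 0) z + (\<Sum>p\<in>PB. aB p * kernel p z))"
    using shapiro_shields_expansion[of B] unfolding SB_def GB_def PB_def by auto
  show ?thesis
  proof (cases "GB = 0")
    case True
    then have "SB = (\<lambda>_. 0)" using shapiro_shields_eq_0_if_gram_eq_0[OF B] unfolding GB_def SB_def by blast
    then show ?thesis unfolding SB_def by (intro exI[of _ 0]) simp
  next
    case False
    then have "GA \<noteq> 0" using gram_kernels_eq_0_mono[OF A B AB] unfolding GA_def GB_def by blast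
    define x where "x = (\<lambda>z. GB * SA z - GA * SB z)"
    have "(\<Sum>p\<in>PA. aA p * kernel p z) = (\<Sum>p\<in>PB. (if p \<in> PA then aA p else 0) * kernel p z)" for z
      unfolding PA_def PB_def using set_kernel_indices_mono[OF AB] by (intro sum_extend_by_zero) simp_all
    then have "x = (\<lambda>z. \<Sum>p\<in>PB. (GB * (if p \<in> PA then aA p else 0) - GA * aB p) * kernel p z)"
      unfolding x_def SA SB by (simp add: fun_eq_iff algebra_simps sum_distrib_left sum_subtractf)
    moreover have "ip x (kernel p) = 0" if "p \<in> PB" for p
    proof -
      have "SA \<in> H" "SB \<in> H" unfolding SA_def SB_def using A B by (simp_all add: shapiro_shields_mem)
      then have "ip x (kernel p) = GB * ip SA (kernel p) - GA * ip SB (kernel p)"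
        unfolding x_def using kernel_mem_if_index[OF B] that
        by (simp add: ip_diff_left ip_scale_left scale_mem PB_def)
      then show ?thesis
        using orth shapiro_shields_orthogonal[OF B] that unfolding SA_def SB_def PB_def by simp
    qed
    ultimately have "x = (\<lambda>_. 0)"
      using kernel_mem_if_index[OF B] unfolding PB_def by (intro eq_0_if_orthogonal_span) auto
    then have "SB = (\<lambda>z. (GB / GA) * SA z)" unfolding x_def using \<open>GA \<noteq> 0\<close>
      by (simp add: fun_eq_iff field_simps)
    then show ?thesis unfolding SA_def SB_def by blast
  qed
qed

lemma shapiro_shields_eq_0_if_count_0_less:
  assumes less: "count A 0 < count B 0"
  shows "shapiro_shields \<Omega> H ip B = (\<lambda>_. 0)"
proof -
  define SA where "SA = shapiro_shields \<Omega> H ip A"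
  define PA PB where "PA = set (kernel_indices A)" and "PB = set (kernel_indices B)"
  define GA where "GA = gram ip (map kernel (kernel_indices A))"
  define u where "u = (0 :: complex, count A 0)"
  have u: "u \<in> PB" "u \<notin> PA" unfolding u_def PA_def PB_def set_kernel_indices using less by simp_all
  have "PA \<subseteq> PB" unfolding PA_def PB_def using AB by (rule set_kernel_indices_mono)
  then have I_PB: "insert u PA \<subseteq> PB" using u(1) by simp
  obtain aA where SA0: "SA = (\<lambda>z. GA * kernel u z + (\<Sum>p\<in>PA. aA p * kernel p z))"
    using shapiro_shields_expansion[of A] unfolding SA_def GA_def PA_def u_def by auto
  have "(\<Sum>p\<in>PA. (aA(u := GA)) p * kernel p z) = (\<Sum>p\<in>PA. aA p * kernel p z)" for z
    using u(2) by (intro sum.cong) auto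
  then have SA: "SA = (\<lambda>z. \<Sum>p\<in>insert u PA. (aA(u := GA)) p * kernel p z)"
    unfolding SA0 using u(2) by (simp add: PA_def)
  have "SA = (\<lambda>_. 0)"
    using SA kernel_mem_if_index[OF B] I_PB orth unfolding SA_def PB_def
    by (intro eq_0_if_orthogonal_span) auto
  show ?thesis
  proof (rule shapiro_shields_eq_0_if_gram_eq_0[OF B])
    show "gram ip (map kernel (kernel_indices B)) = 0"
    proof (cases "GA = 0")
      case True
      then show ?thesis using gram_kernels_eq_0_mono[OF A B AB] unfolding GA_def by blast
    next
      case False
      then have "dependent_family kernel (insert u PA)"
        unfolding dependent_family_def using SA \<open>SA = (\<lambda>_. 0)\<close> by (intro exI[of _ "aA(u := GA)"]) auto
      then have "dependent_family kernel PB"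
        using dependent_family_mono[OF List.finite_set I_PB[unfolded PB_def]] unfolding PB_def by blast
      then show ?thesis using gram_kernels_eq_0_iff[OF B] unfolding PB_def by blast
    qed
  qed
qed

end

end

theorem mainTheorem15:
  fixes \<Omega> :: "complex set" and H :: "(complex \<Rightarrow> complex) set"
    and ip :: "(complex \<Rightarrow> complex) \<Rightarrow> (complex \<Rightarrow> complex) \<Rightarrow> complex"
    and A B :: "complex multiset"
  assumes "analytic_hilbert_space \<Omega> H ip"
    and "reproducible_multiset \<Omega> H ip A"
    and "reproducible_multiset \<Omega> H ip B"
    and "A \<subseteq># B"
    and "\<forall>\<beta>. enat (count B \<beta>) \<le> zero_mult \<Omega> H ip (shapiro_shields \<Omega> H ip A) \<beta>"
  shows "\<exists>c::complex. shapiro_shields \<Omega> H ip B = (\<lambda>z. c * shapiro_shields \<Omega> H ip A z)"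
proof -
  interpret analytic_function_space \<Omega> H ip
    using assms(1) by (rule analytic_function_space_if_analytic_hilbert_space)
  have orth: "ip (shapiro_shields \<Omega> H ip A) (kernel p) = 0" if "p \<in> set (kernel_indices B)" for p
    using that ip_kern_eq_0_if_le_zero_mult[OF shapiro_shields_mem[OF assms(2)] assms(5)[rule_format]]
    unfolding set_kernel_indices kernel_def by auto
  have "count A 0 \<le> count B 0" using assms(4) by (simp add: subseteq_mset_def)
  then consider "count A 0 = count B 0" | "count A 0 < count B 0" by linarith
  then show ?thesis
  proof cases
    case 1
    then show ?thesis using shapiro_shields_proportional_if_count_0_eq[OF assms(2-4) orth] by blast
  next
    case 2
    then have "shapiro_shields \<Omega> H ip B = (\<lambda>_. 0)"
      using shapiro_shields_eq_0_if_count_0_less[OF assms(2-4) orth] by blast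
    then show ?thesis by (intro exI[of _ 0]) simp
  qed
qed


end
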